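(* Let $c_k\in(0,1)$, $l_k>0$ decreasing to $0$, $I_k$ the open interval of length $l_k$ centered at $c_k$, and assume (A1), (A2), (A3) below. Let $f\in C([0,1])$ and $\mu_k=\frac{1}{|I_k|}f(x)\,dx|_{I_k}$ (with $dx$ Lebesgue measure restricted to $[0,1]$). Then, as $n\to\infty$, $$\frac{1}{(\#\mathcal{A}_n)^2}\sum_{i,j\in\mathcal{A}_n,\,i\ne j}I(\mu_i,\mu_j)=I(f(x)\phi(x)\,dx)+o(1).$$
   Context: $I(\nu,\mu)=\iint(-\log|z-w|)\,d\nu(z)\,d\mu(w)$, $I(\mu)=I(\mu,\mu)$. Notation: $\mathcal{A}_n=\{n,\dots,2n-1\}$, $\mathcal{A}_{n,q}=\mathcal{A}_n\cup\mathcal{A}_{2n}\cup\cdots\cup\mathcal{A}_{2^qn}$. (A1) There is $\phi\in L^1([0,1],dx)$, $\phi>0$ a.e., with $\frac{1}{\#\mathcal{A}_n}\sum_{k\in\mathcal{A}_n}g(c_k)\to\int_0^1 g\phi\,dx$ for every $g\in C([0,1])$; $\phi$ in the claim is this function. There are integers $q(n)\to\infty$ such that: (A2) for every $\varepsilon>0$ there is $\delta>0$ such that for all large $n$ and all $n',n''\in\{n,2n,\dots,2^{q(n)}n\}$, $\frac{1}{\#(\mathcal{A}_{n'}\times\mathcal{A}_{n''})}\sum_{i\in\mathcal{A}_{n'},j\in\mathcal{A}_{n''},\,i\neq j,\,|c_i-c_j|<\delta}(-\log|c_i-c_j|)<\varepsilon$; (A3) for every $\varepsilon>0$, for all large $n$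 and all $i\ne j$ in $\mathcal{A}_{n,q(n)}$, $\frac{l_i+l_j}{2|c_i-c_j|}<\varepsilon$. *)

theory Defs
  imports "HOL-Analysis.Analysis"
begin

text \<open>Logarithmic mutual energy of two (signed) measures on the real line given by
  their densities g and h with respect to Lebesgue measure:
  I(g dx, h dx) = double integral of -log|x-y| g(x) h(y) dx dy.\<close>
definition log_energy :: "(real \<Rightarrow> real) \<Rightarrow> (real \<Rightarrow> real) \<Rightarrow> real" where
  "log_energy g h =
     integral\<^sup>L (lborel \<Otimes>\<^sub>M lborel) (\<lambda>(x, y). - ln \<bar>x - y\<bar> * g x * h y)"

definition blockA :: "nat \<Rightarrow> nat set" where
  "blockA n = {n..<2 * n}"

definition blockAq :: "nat \<Rightarrow> nat \<Rightarrow> nat set" where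
  "blockAq n q = (\<Union>m\<in>{..q}. blockA (2 ^ m * n))"

definition centred_interval :: "real \<Rightarrow> real \<Rightarrow> real set" where
  "centred_interval c l = {c - l / 2 <..< c + l / 2}"

definition mu_density :: "(real \<Rightarrow> real) \<Rightarrow> real \<Rightarrow> real \<Rightarrow> real \<Rightarrow> real" where
  "mu_density f c l x = indicator (centred_interval c l \<inter> {0..1}) x * f x / l"

end

theory Submission
  imports Defs
begin

text \<open>
  If \<open>l\<^sub>i + l\<^sub>j\<close> is small compared with \<open>|c\<^sub>i - c\<^sub>j|\<close> (A3), the kernel \<open>-log |x - y|\<close> is
  almost constant on \<open>I\<^sub>i \<times> I\<^sub>j\<close>, so \<open>I(\<mu>\<^sub>i, \<mu>\<^sub>j)\<close> is close to \<open>-log |c\<^sub>i - c\<^sub>j|\<close> times the product of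
  the masses of \<open>\<mu>\<^sub>i\<close> and \<open>\<mu>\<^sub>j\<close>. By continuity of \<open>f\<close> these masses are close to \<open>f(c\<^sub>i)\<close>, except for
  the intervals sticking out of \<open>[0, 1]\<close>, whose proportion vanishes because \<open>\<phi> dx\<close> has no atoms.
  This leaves the discrete energy \<open>n\<^sup>-\<^sup>2 \<Sum>\<^sub>i\<^sub>\<noteq>\<^sub>j -log |c\<^sub>i - c\<^sub>j| f(c\<^sub>i) f(c\<^sub>j)\<close>. With the kernel cut off at
  level \<open>d\<close>, i.e. \<open>-log max |x - y| d\<close>, it converges to the corresponding continuous energy by
  the two-dimensional form of (A1), which follows from (A1) by Stone--Weierstrass. The cut-off
  changes the discrete energy by little thanks to (A2), and the continuous one by little by
  monotone convergence; the same comparison with (A2) bounds the cut-off energies of \<open>\<phi> dx\<close>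
  uniformly in \<open>d\<close>, so that \<open>I(\<phi> dx)\<close> is finite.
\<close>

section \<open>Integrals over product measures\<close>

lemma (in pair_sigma_finite) integrable_tensor:
  fixes g :: "'a \<Rightarrow> real" and h :: "'b \<Rightarrow> real"
  assumes g: "integrable M1 g" and h: "integrable M2 h"
  shows "integrable (M1 \<Otimes>\<^sub>M M2) (\<lambda>(x, y). g x * h y)"
proof (rule Fubini_integrable)
  show "(\<lambda>(x, y). g x * h y) \<in> borel_measurable (M1 \<Otimes>\<^sub>M M2)"
    using g h by measurable
  have "(\<lambda>x. \<integral>y. norm (case (x, y) of (x, y) \<Rightarrow> g x * h y) \<partial>M2)
      = (\<lambda>x. norm (g x) * (\<integral>y. norm (h y) \<partial>M2))"
    by (simp add: abs_mult)
  then show "integrable M1 (\<lambda>x. \<integral>y. norm (case (x, y) of (x, y) \<Rightarrow> g x * h y) \<partial>M2)"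
    using g by (simp add: integrable_norm)
  show "AE x in M1. integrable M2 (\<lambda>y. case (x, y) of (x, y) \<Rightarrow> g x * h y)"
    using h by simp
qed

lemma (in pair_sigma_finite) integral_tensor:
  fixes g :: "'a \<Rightarrow> real" and h :: "'b \<Rightarrow> real"
  assumes "integrable M1 g" and "integrable M2 h"
  shows "integral\<^sup>L (M1 \<Otimes>\<^sub>M M2) (\<lambda>(x, y). g x * h y) = integral\<^sup>L M1 g * integral\<^sup>L M2 h"
  using integral_fst[of "\<lambda>x y. g x * h y"] integrable_tensor[OF assms] by simp

lemma (in pair_sigma_finite) bounded_kernel_integral:
  fixes K :: "'a \<times> 'b \<Rightarrow> real" and g :: "'a \<Rightarrow> real" and h :: "'b \<Rightarrow> real"
  assumes g: "integrable M1 g" and h: "integrable M2 h"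
    and K: "K \<in> borel_measurable (M1 \<Otimes>\<^sub>M M2)" and "B \<ge> 0"
    and bound: "\<And>x y. g x \<noteq> 0 \<Longrightarrow> h y \<noteq> 0 \<Longrightarrow> \<bar>K (x, y)\<bar> \<le> B"
  shows integrable_bounded_kernel:
      "integrable (M1 \<Otimes>\<^sub>M M2) (\<lambda>(x, y). K (x, y) * g x * h y)"
    and integral_bounded_kernel_abs_le:
      "\<bar>integral\<^sup>L (M1 \<Otimes>\<^sub>M M2) (\<lambda>(x, y). K (x, y) * g x * h y)\<bar>
         \<le> B * (\<integral>x. \<bar>g x\<bar> \<partial>M1) * (\<integral>y. \<bar>h y\<bar> \<partial>M2)"
proof -
  let ?P = "M1 \<Otimes>\<^sub>M M2"
  let ?dom = "\<lambda>z. B * (case z of (x, y) \<Rightarrow> \<bar>g x\<bar> * \<bar>h y\<bar>)"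
  have abs_gh: "integrable M1 (\<lambda>x. \<bar>g x\<bar>)" "integrable M2 (\<lambda>y. \<bar>h y\<bar>)"
    using g h by auto
  have dom: "integrable ?P ?dom"
    using integrable_tensor[OF abs_gh] by (rule integrable_mult_right)
  have pointwise: "\<bar>case z of (x, y) \<Rightarrow> K (x, y) * g x * h y\<bar> \<le> ?dom z" for z
  proof (cases z)
    case (Pair x y)
    have "\<bar>K (x, y)\<bar> * (\<bar>g x\<bar> * \<bar>h y\<bar>) \<le> B * (\<bar>g x\<bar> * \<bar>h y\<bar>)"
      using bound[of x y] by (cases "g x = 0 \<or> h y = 0") (auto intro: mult_right_mono)
    then show ?thesis
      using Pair by (simp add: abs_mult mult.assoc)
  qed
  have "(\<lambda>(x, y). K (x, y) * g x * h y) \<in> borel_measurable ?P"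
    using K g h by measurable
  then show integrable: "integrable ?P (\<lambda>(x, y). K (x, y) * g x * h y)"
    using \<open>B \<ge> 0\<close> pointwise
    by (intro Bochner_Integration.integrable_bound[OF dom]) (auto intro!: AE_I2 simp: split_beta)
  have "\<bar>integral\<^sup>L ?P (\<lambda>(x, y). K (x, y) * g x * h y)\<bar> \<le> integral\<^sup>L ?P ?dom"
    using integral_abs_bound integral_mono[OF _ dom pointwise] integrable by (blast intro: order_trans)
  also have "\<dots> = B * (\<integral>x. \<bar>g x\<bar> \<partial>M1) * (\<integral>y. \<bar>h y\<bar> \<partial>M2)"
    using integral_tensor[OF abs_gh] by simp
  finally show "\<bar>integral\<^sup>L ?P (\<lambda>(x, y). K (x, y) * g x * h y)\<bar>
      \<le> B * (\<integral>x. \<bar>g x\<bar> \<partial>M1) * (\<integral>y. \<bar>h y\<bar> \<partial>M2)" .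
qed

interpretation lborel_pair: pair_sigma_finite lborel lborel ..

lemma AE_lborel_pair_neq: "AE z in lborel \<Otimes>\<^sub>M lborel. fst z \<noteq> (snd z :: real)"
proof (rule lborel_pair.AE_pair_measure)
  show "{z \<in> space (lborel \<Otimes>\<^sub>M lborel). fst z \<noteq> (snd z :: real)} \<in> sets (lborel \<Otimes>\<^sub>M lborel)"
    by measurable
  show "AE x in lborel. AE y in lborel. fst (x, y) \<noteq> (snd (x, y) :: real)"
    by (intro AE_I2 eventually_mono[OF AE_lborel_singleton]) auto
qed

lemma continuous_borel_measurable_lborel_pair:
  fixes G :: "real \<times> real \<Rightarrow> real"
  assumes "continuous_on UNIV G"
  shows "G \<in> borel_measurable (lborel \<Otimes>\<^sub>M lborel)"
  using borel_measurable_continuous_onI[OF assms] by (simp add: lborel_prod measurable_lborel1)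

section \<open>Equidistribution of pairs\<close>

inductive_set tensor_sums :: "(real \<times> real \<Rightarrow> real) set" where
  tensor: "continuous_on UNIV u \<Longrightarrow> continuous_on UNIV v \<Longrightarrow>
    (\<lambda>z. u (fst z) * v (snd z)) \<in> tensor_sums"
| add: "F \<in> tensor_sums \<Longrightarrow> G \<in> tensor_sums \<Longrightarrow> (\<lambda>z. F z + G z) \<in> tensor_sums"

lemma tensor_sums_continuous: "F \<in> tensor_sums \<Longrightarrow> continuous_on UNIV F"
proof (induction rule: tensor_sums.induct)
  case (tensor u v)
  then show ?case
    by (intro continuous_on_mult continuous_on_compose2[OF tensor(1)]
        continuous_on_compose2[OF tensor(2)])
      (auto intro: continuous_intros)
qed (auto intro: continuous_on_add)

lemma tensor_sums_mult:
  assumes "F \<in> tensor_sums" and "G \<in> tensor_sums"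
  shows "(\<lambda>z. F z * G z) \<in> tensor_sums"
  using assms
proof (induction arbitrary: G rule: tensor_sums.induct)
  case (tensor u v)
  from tensor(3) show ?case
  proof (induction rule: tensor_sums.induct)
    case (tensor u' v')
    have "(\<lambda>z. (u (fst z) * u' (fst z)) * (v (snd z) * v' (snd z))) \<in> tensor_sums"
      using \<open>continuous_on UNIV u\<close> \<open>continuous_on UNIV v\<close> tensor
      by (intro tensor_sums.tensor continuous_on_mult)
    then show ?case by (simp add: ac_simps)
  next
    case (add F G)
    then show ?case by (simp add: distrib_left tensor_sums.add)
  qed
next
  case (add F1 F2)
  then show ?case by (simp add: distrib_right tensor_sums.add)
qed

lemma tensor_sums_dense:
  assumes "compact S" and "continuous_on S G" and "e > 0"
  shows "\<exists>F\<in>tensor_sums. \<forall>z\<in>S. \<bar>G z - F z\<bar> < e"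
proof -
  have const: "(\<lambda>_. k) \<in> tensor_sums" for k
    using tensor_sums.tensor[of "\<lambda>_. k" "\<lambda>_. 1"] by simp
  interpret function_ring_on tensor_sums S
  proof unfold_locales
    show "(\<lambda>z. F z + G z) \<in> tensor_sums" if "F \<in> tensor_sums" "G \<in> tensor_sums" for F G
      using that by (rule tensor_sums.add)
    show "\<exists>F\<in>tensor_sums. F z \<noteq> F w" if "z \<noteq> w" for z w :: "real \<times> real"
    proof (cases "fst z = fst w")
      case True
      then have "snd z \<noteq> snd w" using that by (simp add: prod_eq_iff)
      moreover have "(\<lambda>z. 1 * snd z) \<in> tensor_sums"
        by (rule tensor_sums.tensor) (auto intro: continuous_intros)
      ultimately show ?thesis by (intro bexI) auto
    next
      case False
      moreover have "(\<lambda>z. fst z * 1) \<in> tensor_sums"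
        by (rule tensor_sums.tensor) (auto intro: continuous_intros)
      ultimately show ?thesis by (intro bexI) auto
    qed
  qed (use assms tensor_sums_continuous const tensor_sums_mult in \<open>auto intro: continuous_on_subset\<close>)
  show ?thesis
    using Stone_Weierstrass_basic[OF assms(2,3)] .
qed

locale block_equidistributed =
  fixes c :: "nat \<Rightarrow> real" and \<Phi> :: "real \<Rightarrow> real"
  assumes c_in_unit: "\<And>k. c k \<in> {0..1}"
    and integrable_\<Phi>: "integrable lborel \<Phi>"
    and \<Phi>_nonneg: "\<And>x. \<Phi> x \<ge> 0"
    and \<Phi>_outside: "\<And>x. x \<notin> {0..1} \<Longrightarrow> \<Phi> x = 0"
    and equidistributed: "\<And>g. continuous_on UNIV g \<Longrightarrow>
      (\<lambda>n. (\<Sum>k\<in>blockA n. g (c k)) / real n) \<longlonglongrightarrow> (\<integral>x. g x * \<Phi> x \<partial>lborel)"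
begin

definition pair_mean :: "(real \<times> real \<Rightarrow> real) \<Rightarrow> nat \<Rightarrow> real" where
  "pair_mean G n = (\<Sum>(i, j)\<in>blockA n \<times> blockA n. G (c i, c j)) / real n ^ 2"

definition pair_integral :: "(real \<times> real \<Rightarrow> real) \<Rightarrow> real" where
  "pair_integral G = integral\<^sup>L (lborel \<Otimes>\<^sub>M lborel) (\<lambda>(x, y). G (x, y) * \<Phi> x * \<Phi> y)"

lemma \<Phi>_nonzero_imp: "\<Phi> x \<noteq> 0 \<Longrightarrow> x \<in> {0..1}"
  using \<Phi>_outside by blast

lemma integrable_mult_\<Phi>:
  assumes g: "continuous_on UNIV g"
  shows "integrable lborel (\<lambda>x. g x * \<Phi> x)"
proof -
  obtain B where B: "\<And>x. x \<in> {0..1} \<Longrightarrow> norm (g x) \<le> B"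
    using continuous_on_compact_bound[OF compact_Icc continuous_on_subset[OF g subset_UNIV]] by blast
  have dominated: "\<bar>g x * \<Phi> x\<bar> \<le> B * \<Phi> x" for x
  proof (cases "x \<in> {0..1}")
    case True
    then show ?thesis
      using B[OF True] \<Phi>_nonneg[of x] by (simp add: abs_mult mult_right_mono)
  next
    case False
    then show ?thesis by (simp add: \<Phi>_outside)
  qed
  show ?thesis
  proof (rule Bochner_Integration.integrable_bound[of lborel "\<lambda>x. B * \<Phi> x"])
    show "integrable lborel (\<lambda>x. B * \<Phi> x)"
      using integrable_\<Phi> by simp
    show "(\<lambda>x. g x * \<Phi> x) \<in> borel_measurable lborel"
      using borel_measurable_continuous_onI[OF g] integrable_\<Phi> by measurable
    show "AE x in lborel. norm (g x * \<Phi> x) \<le> norm (B * \<Phi> x)"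
      using dominated by (intro AE_I2) (simp add: order_trans[OF _ abs_ge_self])
  qed
qed

lemma integrable_pair_integrand:
  assumes "continuous_on UNIV G"
  shows "integrable (lborel \<Otimes>\<^sub>M lborel) (\<lambda>(x, y). G (x, y) * \<Phi> x * \<Phi> y)"
proof -
  obtain B where "B \<ge> 0" "\<And>z. z \<in> {0..1} \<times> {0..1} \<Longrightarrow> norm (G z) \<le> B"
    using continuous_on_compact_bound[OF compact_Times[OF compact_Icc compact_Icc]
        continuous_on_subset[OF assms subset_UNIV]] by blast
  then show ?thesis
    by (intro lborel_pair.integrable_bounded_kernel[OF integrable_\<Phi> integrable_\<Phi>
          continuous_borel_measurable_lborel_pair[OF assms]]) (auto dest!: \<Phi>_nonzero_imp)
qed

lemma pair_integral_abs_le: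
  assumes "continuous_on UNIV G" and "e \<ge> 0"
    and "\<And>x y. x \<in> {0..1} \<Longrightarrow> y \<in> {0..1} \<Longrightarrow> \<bar>G (x, y)\<bar> \<le> e"
  shows "\<bar>pair_integral G\<bar> \<le> e * (\<integral>x. \<Phi> x \<partial>lborel)\<^sup>2"
proof -
  have "\<bar>pair_integral G\<bar> \<le> e * (\<integral>x. \<bar>\<Phi> x\<bar> \<partial>lborel) * (\<integral>x. \<bar>\<Phi> x\<bar> \<partial>lborel)"
    unfolding pair_integral_def
    by (rule lborel_pair.integral_bounded_kernel_abs_le[OF integrable_\<Phi> integrable_\<Phi>
          continuous_borel_measurable_lborel_pair[OF assms(1)] assms(2)])
      (use assms(3) \<Phi>_nonzero_imp in blast)
  then show ?thesis
    by (simp add: \<Phi>_nonneg power2_eq_square mult.assoc)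
qed

lemma pair_integral_add:
  assumes "continuous_on UNIV F" and "continuous_on UNIV G"
  shows "pair_integral (\<lambda>z. F z + G z) = pair_integral F + pair_integral G"
  using Bochner_Integration.integral_add[OF integrable_pair_integrand[OF assms(1)]
      integrable_pair_integrand[OF assms(2)]]
  by (simp add: pair_integral_def split_beta split_beta' distrib_right)

lemma pair_integral_diff:
  assumes "continuous_on UNIV F" and "continuous_on UNIV G"
  shows "pair_integral (\<lambda>z. F z - G z) = pair_integral F - pair_integral G"
  using Bochner_Integration.integral_diff[OF integrable_pair_integrand[OF assms(1)]
      integrable_pair_integrand[OF assms(2)]]
  by (simp add: pair_integral_def split_beta split_beta' left_diff_distrib)

lemma pair_mean_add: "pair_mean (\<lambda>z. F z + G z) n = pair_mean F n + pair_mean G n"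
  unfolding pair_mean_def by (simp add: sum.distrib split_beta add_divide_distrib)

lemma pair_mean_diff: "pair_mean (\<lambda>z. F z - G z) n = pair_mean F n - pair_mean G n"
  unfolding pair_mean_def by (simp add: sum_subtractf split_beta diff_divide_distrib)

lemma pair_mean_abs_le:
  assumes "e \<ge> 0" and "\<And>x y. x \<in> {0..1} \<Longrightarrow> y \<in> {0..1} \<Longrightarrow> \<bar>G (x, y)\<bar> \<le> e"
  shows "\<bar>pair_mean G n\<bar> \<le> e"
proof (cases "n = 0")
  case True
  then show ?thesis using assms by (simp add: pair_mean_def)
next
  case False
  have "\<bar>\<Sum>(i, j)\<in>blockA n \<times> blockA n. G (c i, c j)\<bar> \<le> (\<Sum>(i, j)\<in>blockA n \<times> blockA n. e)"
    by (rule order_trans[OF sum_abs sum_mono]) (use assms(2) c_in_unit in auto)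
  also have "\<dots> = e * real n ^ 2"
    by (simp add: blockA_def power2_eq_square card_cartesian_product)
  finally show ?thesis
    using False by (simp add: pair_mean_def divide_le_eq)
qed

lemma tendsto_pair_mean_tensor:
  assumes u: "continuous_on UNIV u" and v: "continuous_on UNIV v"
  shows "(\<lambda>n. pair_mean (\<lambda>z. u (fst z) * v (snd z)) n)
    \<longlonglongrightarrow> pair_integral (\<lambda>z. u (fst z) * v (snd z))"
proof -
  have integral_eq: "pair_integral (\<lambda>z. u (fst z) * v (snd z))
      = (\<integral>x. u x * \<Phi> x \<partial>lborel) * (\<integral>y. v y * \<Phi> y \<partial>lborel)"
    using lborel_pair.integral_tensor[OF integrable_mult_\<Phi>[OF u] integrable_mult_\<Phi>[OF v]]
    by (simp add: pair_integral_def split_beta mult_ac)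
  have mean_eq: "pair_mean (\<lambda>z. u (fst z) * v (snd z)) n
      = ((\<Sum>k\<in>blockA n. u (c k)) / real n) * ((\<Sum>k\<in>blockA n. v (c k)) / real n)" for n
    by (simp add: pair_mean_def sum_product sum.cartesian_product power2_eq_square)
  show ?thesis
    unfolding integral_eq mean_eq by (intro tendsto_mult equidistributed u v)
qed

lemma tendsto_pair_mean_tensor_sums:
  "F \<in> tensor_sums \<Longrightarrow> (\<lambda>n. pair_mean F n) \<longlonglongrightarrow> pair_integral F"
proof (induction rule: tensor_sums.induct)
  case (tensor u v)
  then show ?case by (rule tendsto_pair_mean_tensor)
next
  case (add F G)
  then show ?case
    by (simp add: pair_mean_add pair_integral_add tensor_sums_continuous tendsto_add)
qed

text \<open>By Stone--Weierstrass it suffices to consider sums of products \<open>u x * v y\<close>, for which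
  the pair mean is the product of two one-dimensional means.\<close>
theorem tendsto_pair_mean:
  assumes G: "continuous_on UNIV G"
  shows "(\<lambda>n. pair_mean G n) \<longlonglongrightarrow> pair_integral G"
proof (rule tendstoI)
  fix e :: real
  assume "e > 0"
  define P where "P = (\<integral>x. \<Phi> x \<partial>lborel)\<^sup>2"
  define d where "d = e / (3 + P)"
  have "P \<ge> 0" by (simp add: P_def)
  then have "d > 0"
    using \<open>e > 0\<close> by (simp add: d_def)
  have "d + d + d * P \<le> d * (3 + P)"
    using \<open>d > 0\<close> by (simp add: algebra_simps)
  also have "\<dots> = e"
    using \<open>P \<ge> 0\<close> by (simp add: d_def)
  finally have d_le: "d + d + d * P \<le> e" .
  obtain F where F: "F \<in> tensor_sums" and close: "\<forall>z\<in>{0..1} \<times> {0..1}. \<bar>G z - F z\<bar> < d"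
    using tensor_sums_dense[OF compact_Times[OF compact_Icc compact_Icc]
        continuous_on_subset[OF G subset_UNIV] \<open>d > 0\<close>] by blast
  have F_cont: "continuous_on UNIV F"
    using F by (rule tensor_sums_continuous)
  have bound: "\<bar>G (x, y) - F (x, y)\<bar> \<le> d" if "x \<in> {0..1}" "y \<in> {0..1}" for x y
    using close that by (auto intro: less_imp_le)
  have integral_close: "\<bar>pair_integral G - pair_integral F\<bar> \<le> d * P"
    using pair_integral_abs_le[of "\<lambda>z. G z - F z", OF _ _ bound] \<open>d > 0\<close> G F_cont
    by (simp add: pair_integral_diff continuous_on_diff P_def)
  have mean_close: "\<bar>pair_mean G n - pair_mean F n\<bar> \<le> d" for n
    using pair_mean_abs_le[of d "\<lambda>z. G z - F z" n, OF _ bound] \<open>d > 0\<close> by (simp add: pair_mean_diff)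
  have "\<forall>\<^sub>F n in sequentially. dist (pair_mean F n) (pair_integral F) < d"
    using tendsto_pair_mean_tensor_sums[OF F] \<open>d > 0\<close> by (rule tendstoD)
  then show "\<forall>\<^sub>F n in sequentially. dist (pair_mean G n) (pair_integral G) < e"
  proof eventually_elim
    case (elim n)
    then show ?case
      using mean_close[of n] integral_close d_le by (simp add: dist_real_def abs_le_iff abs_less_iff)
  qed
qed

end

section \<open>Logarithmic kernels\<close>

definition log_kernel :: "real \<times> real \<Rightarrow> real" where
  "log_kernel z = - ln \<bar>fst z - snd z\<bar>"

definition cut_log_kernel :: "real \<Rightarrow> real \<times> real \<Rightarrow> real" where
  "cut_log_kernel d z = - ln (max \<bar>fst z - snd z\<bar> d)"

lemma log_energy_eq_log_kernel:
  "log_energy g h = integral\<^sup>L (lborel \<Otimes>\<^sub>M lborel) (\<lambda>(x, y). log_kernel (x, y) * g x * h y)"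
  unfolding log_energy_def log_kernel_def by simp

lemma borel_measurable_log_kernel: "log_kernel \<in> borel_measurable (lborel \<Otimes>\<^sub>M lborel)"
  unfolding log_kernel_def by measurable

lemma log_kernel_nonneg: "x \<in> {0..1} \<Longrightarrow> y \<in> {0..1} \<Longrightarrow> 0 \<le> log_kernel (x, y)"
  unfolding log_kernel_def by (cases "x = y") (auto simp: ln_le_zero_iff)

lemma log_kernel_le: "0 < d \<Longrightarrow> d \<le> \<bar>x - y\<bar> \<Longrightarrow> log_kernel (x, y) \<le> - ln d"
  unfolding log_kernel_def by simp

lemma continuous_on_cut_log_kernel: "d > 0 \<Longrightarrow> continuous_on UNIV (cut_log_kernel d)"
  unfolding cut_log_kernel_def by (intro continuous_intros) auto

lemma cut_log_kernel_antimono: "0 < d' \<Longrightarrow> d' \<le> d \<Longrightarrow> cut_log_kernel d z \<le> cut_log_kernel d' z"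
  unfolding cut_log_kernel_def by (auto intro!: ln_mono simp: max_def)

lemma cut_log_kernel_eq_log_kernel: "d \<le> \<bar>fst z - snd z\<bar> \<Longrightarrow> cut_log_kernel d z = log_kernel z"
  unfolding cut_log_kernel_def log_kernel_def by (simp add: max_def)

lemma cut_log_kernel_diag: "d > 0 \<Longrightarrow> cut_log_kernel d (x, x) = - ln d"
  unfolding cut_log_kernel_def by simp

lemma cut_log_kernel_le_log_kernel: "x \<noteq> y \<Longrightarrow> cut_log_kernel d (x, y) \<le> log_kernel (x, y)"
  unfolding cut_log_kernel_def log_kernel_def by (auto intro!: ln_mono)

lemma log_kernel_minus_cut_le:
  assumes "x \<noteq> y" and "0 < d" and "d \<le> 1"
  shows "\<bar>log_kernel (x, y) - cut_log_kernel d (x, y)\<bar>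
    \<le> (if \<bar>x - y\<bar> < d then log_kernel (x, y) else 0)"
proof (cases "\<bar>x - y\<bar> < d")
  case True
  then have "cut_log_kernel d (x, y) = - ln d" and "- ln d \<le> log_kernel (x, y)"
    using assms unfolding cut_log_kernel_def log_kernel_def by (auto simp: max_def intro!: ln_mono)
  moreover have "0 \<le> - ln d"
    using assms by simp
  ultimately show ?thesis
    using True by simp
next
  case False
  then show ?thesis
    using cut_log_kernel_eq_log_kernel[of d "(x, y)"] by simp
qed

context block_equidistributed
begin

text \<open>Monotone convergence: the cut-off energies increase to the logarithmic energy of \<open>\<Phi>\<close>,
  which is therefore finite once they are bounded.\<close>
lemma pair_integral_cut_log_kernel_tendsto:
  assumes bounded: "\<And>d. 0 < d \<Longrightarrow> d < 1 \<Longrightarrow> pair_integral (cut_log_kernel d) \<le> C"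
  shows "integrable (lborel \<Otimes>\<^sub>M lborel) (\<lambda>(x, y). log_kernel (x, y) * \<Phi> x * \<Phi> y)"
    and "(\<lambda>m. pair_integral (cut_log_kernel (1 / (real m + 2)))) \<longlonglongrightarrow> pair_integral log_kernel"
proof -
  define d where "d m = 1 / (real m + 2)" for m :: nat
  have d_pos: "d m > 0" and d_lt_1: "d m < 1" for m
    unfolding d_def by (simp_all add: field_simps)
  have d_antimono: "d m' \<le> d m" if "m \<le> m'" for m m'
    unfolding d_def using that by (simp add: frac_le)
  have "d \<longlonglongrightarrow> 0"
    unfolding d_def by real_asymp
  define K where "K m = (\<lambda>(x, y). cut_log_kernel (d m) (x, y) * \<Phi> x * \<Phi> y)" for m
  have integrable_K: "integrable (lborel \<Otimes>\<^sub>M lborel) (K m)" for m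
    unfolding K_def by (rule integrable_pair_integrand[OF continuous_on_cut_log_kernel[OF d_pos]])
  have K_mono: "mono (\<lambda>m. K m z)" for z
  proof (rule monoI)
    fix m m' :: nat
    assume "m \<le> m'"
    then have "cut_log_kernel (d m) z \<le> cut_log_kernel (d m') z"
      using cut_log_kernel_antimono d_pos d_antimono by blast
    then show "K m z \<le> K m' z"
      unfolding K_def using \<Phi>_nonneg by (auto intro!: mult_right_mono split: prod.splits)
  qed
  have K_lim: "AE z in lborel \<Otimes>\<^sub>M lborel.
      (\<lambda>m. K m z) \<longlonglongrightarrow> (\<lambda>(x, y). log_kernel (x, y) * \<Phi> x * \<Phi> y) z"
    using AE_lborel_pair_neq
  proof eventually_elim
    case (elim z)
    then have "\<forall>\<^sub>F m in sequentially. d m < \<bar>fst z - snd z\<bar>"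
      using \<open>d \<longlonglongrightarrow> 0\<close> by (intro order_tendstoD) auto
    then have "\<forall>\<^sub>F m in sequentially. K m z = (\<lambda>(x, y). log_kernel (x, y) * \<Phi> x * \<Phi> y) z"
      by eventually_elim (auto simp: K_def cut_log_kernel_eq_log_kernel split: prod.splits)
    then show ?case
      by (rule tendsto_eventually)
  qed
  have integral_K: "integral\<^sup>L (lborel \<Otimes>\<^sub>M lborel) (K m) = pair_integral (cut_log_kernel (d m))" for m
    unfolding pair_integral_def K_def by simp
  have "incseq (\<lambda>m. pair_integral (cut_log_kernel (d m)))"
    unfolding incseq_def integral_K[symmetric]
    by (intro allI impI integral_mono integrable_K) (use K_mono in \<open>auto simp: mono_def\<close>)
  moreover have "bdd_above (range (\<lambda>m. pair_integral (cut_log_kernel (d m))))"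
    using bounded d_pos d_lt_1 by (auto intro!: bdd_aboveI)
  ultimately have lim: "(\<lambda>m. pair_integral (cut_log_kernel (d m)))
      \<longlonglongrightarrow> (SUP m. pair_integral (cut_log_kernel (d m)))"
    by (rule LIMSEQ_incseq_SUP[rotated])
  have measurable: "(\<lambda>(x, y). log_kernel (x, y) * \<Phi> x * \<Phi> y) \<in> borel_measurable (lborel \<Otimes>\<^sub>M lborel)"
    using borel_measurable_log_kernel integrable_\<Phi> by measurable
  note monotone_convergence = integrable_monotone_convergence integral_monotone_convergence
  note monotone_convergence =
    monotone_convergence[OF integrable_K _ K_lim lim[folded integral_K] measurable]
  show "integrable (lborel \<Otimes>\<^sub>M lborel) (\<lambda>(x, y). log_kernel (x, y) * \<Phi> x * \<Phi> y)"
    using monotone_convergence(1) K_mono by auto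
  have "pair_integral log_kernel = (SUP m. pair_integral (cut_log_kernel (d m)))"
    unfolding pair_integral_def[of log_kernel] integral_K[symmetric]
    using monotone_convergence(2) K_mono by auto
  with lim show "(\<lambda>m. pair_integral (cut_log_kernel (1 / (real m + 2)))) \<longlonglongrightarrow> pair_integral log_kernel"
    unfolding d_def by simp
qed

lemma log_energy_weighted_eq_pair_integral:
  "log_energy (\<lambda>x. w x * \<Phi> x) (\<lambda>x. w x * \<Phi> x) = pair_integral (\<lambda>z. log_kernel z * (w (fst z) * w (snd z)))"
  unfolding log_energy_eq_log_kernel pair_integral_def
  by (intro Bochner_Integration.integral_cong) (auto simp: mult_ac)

lemma pair_integral_weighted_diff_le:
  fixes K1 K2 w :: "real \<times> real \<Rightarrow> real"
  assumes K1: "integrable (lborel \<Otimes>\<^sub>M lborel) (\<lambda>(x, y). K1 (x, y) * \<Phi> x * \<Phi> y)"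
    and K2: "integrable (lborel \<Otimes>\<^sub>M lborel) (\<lambda>(x, y). K2 (x, y) * \<Phi> x * \<Phi> y)"
    and w: "w \<in> borel_measurable (lborel \<Otimes>\<^sub>M lborel)" and w_bound: "\<And>z. \<bar>w z\<bar> \<le> B"
    and ordered: "AE z in lborel \<Otimes>\<^sub>M lborel. K1 z \<le> K2 z"
  shows "\<bar>pair_integral (\<lambda>z. K2 z * w z) - pair_integral (\<lambda>z. K1 z * w z)\<bar>
    \<le> B * (pair_integral K2 - pair_integral K1)"
proof -
  let ?P = "lborel \<Otimes>\<^sub>M lborel"
  define I1 where "I1 = (\<lambda>(x, y). K1 (x, y) * \<Phi> x * \<Phi> y)"
  define I2 where "I2 = (\<lambda>(x, y). K2 (x, y) * \<Phi> x * \<Phi> y)"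
  have weighted: "integrable ?P (\<lambda>z. I z * w z)" if I: "integrable ?P I" for I
  proof (rule Bochner_Integration.integrable_bound[of _ "\<lambda>z. B * I z"])
    show "integrable ?P (\<lambda>z. B * I z)"
      using I by simp
    show "(\<lambda>z. I z * w z) \<in> borel_measurable ?P"
      using I w by measurable
    have "\<bar>I z * w z\<bar> \<le> \<bar>B * I z\<bar>" for z
    proof -
      have "\<bar>I z * w z\<bar> \<le> \<bar>I z\<bar> * B"
        unfolding abs_mult using w_bound[of z] by (rule mult_left_mono) simp
      also have "\<dots> \<le> \<bar>B * I z\<bar>"
        unfolding abs_mult by (metis abs_ge_self abs_ge_zero mult.commute mult_left_mono)
      finally show ?thesis .
    qed
    then show "AE z in ?P. norm (I z * w z) \<le> norm (B * I z)"
      by simp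
  qed
  have weighted_eq: "pair_integral (\<lambda>z. K z * w z) = integral\<^sup>L ?P (\<lambda>z. I z * w z)"
    if "I = (\<lambda>(x, y). K (x, y) * \<Phi> x * \<Phi> y)" for K I
    unfolding pair_integral_def that by (intro Bochner_Integration.integral_cong) (auto simp: mult_ac)
  note K1 = K1[folded I1_def] and K2 = K2[folded I2_def]
  have "AE z in ?P. \<bar>I2 z * w z - I1 z * w z\<bar> \<le> B * (I2 z - I1 z)"
    using ordered
  proof eventually_elim
    case (elim z)
    then have "0 \<le> I2 z - I1 z"
      using \<Phi>_nonneg
      by (auto simp: I1_def I2_def split: prod.splits simp flip: left_diff_distrib
          intro!: mult_nonneg_nonneg)
    then have "\<bar>I2 z * w z - I1 z * w z\<bar> = (I2 z - I1 z) * \<bar>w z\<bar>"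
      by (simp add: abs_mult flip: left_diff_distrib)
    also have "\<dots> \<le> (I2 z - I1 z) * B"
      using w_bound \<open>0 \<le> I2 z - I1 z\<close> by (rule mult_left_mono)
    finally show ?case
      by (simp add: mult.commute)
  qed
  then have "integral\<^sup>L ?P (\<lambda>z. \<bar>I2 z * w z - I1 z * w z\<bar>) \<le> integral\<^sup>L ?P (\<lambda>z. B * (I2 z - I1 z))"
    using weighted[OF K1] weighted[OF K2] K1 K2 by (intro integral_mono_AE) auto
  moreover have "\<bar>pair_integral (\<lambda>z. K2 z * w z) - pair_integral (\<lambda>z. K1 z * w z)\<bar>
      \<le> integral\<^sup>L ?P (\<lambda>z. \<bar>I2 z * w z - I1 z * w z\<bar>)"
    unfolding weighted_eq[OF I1_def] weighted_eq[OF I2_def]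
      Bochner_Integration.integral_diff[OF weighted[OF K2] weighted[OF K1], symmetric]
    by (rule integral_abs_bound)
  moreover have "integral\<^sup>L ?P (\<lambda>z. B * (I2 z - I1 z)) = B * (pair_integral K2 - pair_integral K1)"
    unfolding pair_integral_def I1_def[symmetric] I2_def[symmetric]
    using Bochner_Integration.integral_diff[OF K2 K1] by simp
  ultimately show ?thesis
    by linarith
qed

end

lemma abs_ln_le:
  fixes r :: real
  assumes r: "r > 0" and close: "\<bar>r - 1\<bar> \<le> 1/2"
  shows "\<bar>ln r\<bar> \<le> 2 * \<bar>r - 1\<bar>"
proof -
  have "ln r \<le> r - 1"
    using r by (rule ln_le_minus_one)
  then have "ln r \<le> 2 * \<bar>r - 1\<bar>"
    by (auto simp: abs_if)
  moreover have "- ln r \<le> 2 * \<bar>r - 1\<bar>"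
  proof -
    have "- ln r = ln (1 / r)"
      using r by (simp add: ln_div)
    also have "\<dots> \<le> 1 / r - 1"
      using r by (intro ln_le_minus_one) simp
    also have "\<dots> = (1 - r) / r"
      using r by (simp add: field_simps)
    also have "\<dots> \<le> \<bar>r - 1\<bar> / r"
      using r by (intro divide_right_mono) auto
    also have "\<dots> \<le> \<bar>r - 1\<bar> / (1/2)"
      using close unfolding abs_le_iff by (intro divide_left_mono) auto
    finally show ?thesis by simp
  qed
  ultimately show ?thesis
    by (simp add: abs_le_iff)
qed

lemma abs_ln_diff_le:
  fixes u v :: real
  assumes v: "v > 0" and uv: "\<bar>u - v\<bar> \<le> e * v" and "e \<le> 1/2"
  shows "\<bar>ln u - ln v\<bar> \<le> 2 * e"
proof -
  have "u / v - 1 = (u - v) / v"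
    using v by (simp add: field_simps)
  then have "\<bar>u / v - 1\<bar> = \<bar>u - v\<bar> / v"
    using v by simp
  also have "\<dots> \<le> e"
    using v uv by (simp add: divide_le_eq)
  finally have ratio: "\<bar>u / v - 1\<bar> \<le> e" .
  then have "u / v > 0"
    using \<open>e \<le> 1/2\<close> by (auto simp: abs_le_iff)
  then have "u > 0"
    using v by (simp add: zero_less_divide_iff)
  have "\<bar>ln (u / v)\<bar> \<le> 2 * \<bar>u / v - 1\<bar>"
    using \<open>u / v > 0\<close> ratio \<open>e \<le> 1/2\<close> by (intro abs_ln_le) auto
  then show ?thesis
    using ratio \<open>u > 0\<close> v by (simp add: ln_div)
qed

lemma LIMSEQ_eventually_le_const_times:
  fixes X :: "nat \<Rightarrow> real"
  assumes "\<And>e. e > 0 \<Longrightarrow> \<forall>\<^sub>F n in sequentially. \<bar>X n - L\<bar> \<le> C * e"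
  shows "X \<longlonglongrightarrow> L"
proof (rule tendstoI)
  fix e :: real
  assume "e > 0"
  define K where "K = max C 1"
  have "K > 0"
    by (simp add: K_def)
  define e' where "e' = e / (2 * K)"
  have "e' > 0"
    using \<open>e > 0\<close> \<open>K > 0\<close> by (simp add: e'_def)
  have "C * e' \<le> K * e'"
    using \<open>e' > 0\<close> by (intro mult_right_mono) (auto simp: K_def)
  also have "\<dots> = e / 2"
    using \<open>K > 0\<close> by (simp add: e'_def)
  also have "\<dots> < e"
    using \<open>e > 0\<close> by simp
  finally have "C * e' < e" .
  show "\<forall>\<^sub>F n in sequentially. dist (X n) L < e"
    using assms[OF \<open>e' > 0\<close>] by eventually_elim (use \<open>C * e' < e\<close> in \<open>simp add: dist_real_def\<close>)
qed

lemma abs_sum_diff_le: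
  fixes f g h :: "'a \<Rightarrow> real"
  assumes "\<And>x. x \<in> A \<Longrightarrow> \<bar>f x - g x\<bar> \<le> h x"
  shows "\<bar>sum f A - sum g A\<bar> \<le> sum h A"
  using order_trans[OF sum_abs sum_mono[OF assms]] by (simp add: sum_subtractf)

lemma abs_sum_pairs_diff_le:
  fixes f g h :: "'a \<Rightarrow> 'b \<Rightarrow> real"
  assumes "\<And>i j. (i, j) \<in> A \<Longrightarrow> \<bar>f i j - g i j\<bar> \<le> h i j"
  shows "\<bar>(\<Sum>(i, j)\<in>A. f i j) - (\<Sum>(i, j)\<in>A. g i j)\<bar> \<le> (\<Sum>(i, j)\<in>A. h i j)"
  using assms by (intro abs_sum_diff_le) auto

definition offdiag_pairs :: "nat \<Rightarrow> (nat \<times> nat) set" where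
  "offdiag_pairs n = {(i, j) \<in> blockA n \<times> blockA n. i \<noteq> j}"

lemma finite_blockA [simp]: "finite (blockA n)"
  by (simp add: blockA_def)

lemma card_blockA [simp]: "card (blockA n) = n"
  by (simp add: blockA_def)

lemma finite_offdiag_pairs [simp]: "finite (offdiag_pairs n)"
  unfolding offdiag_pairs_def by (rule finite_subset[of _ "blockA n \<times> blockA n"]) auto

lemma card_offdiag_pairs_le: "real (card (offdiag_pairs n)) \<le> real n ^ 2"
proof -
  have "card (offdiag_pairs n) \<le> card (blockA n \<times> blockA n)"
    unfolding offdiag_pairs_def by (intro card_mono) auto
  then show ?thesis
    by (simp add: card_cartesian_product power2_eq_square flip: of_nat_mult)
qed

lemma sum_blockA_square:
  "(\<Sum>p\<in>blockA n \<times> blockA n. g p) = (\<Sum>p\<in>offdiag_pairs n. g p) + (\<Sum>i\<in>blockA n. g (i, i))"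
proof -
  have "blockA n \<times> blockA n = offdiag_pairs n \<union> (\<lambda>i. (i, i)) ` blockA n"
    by (auto simp: offdiag_pairs_def)
  moreover have "offdiag_pairs n \<inter> (\<lambda>i. (i, i)) ` blockA n = {}"
    by (auto simp: offdiag_pairs_def)
  ultimately show ?thesis
    by (simp add: sum.union_disjoint sum.reindex inj_on_def)
qed

lemma sum_offdiag_pairs_add_le:
  fixes w :: "nat \<Rightarrow> real"
  assumes "\<And>i. w i \<ge> 0"
  shows "(\<Sum>(i, j)\<in>offdiag_pairs n. w i + w j) \<le> 2 * real n * (\<Sum>i\<in>blockA n. w i)"
proof -
  have "(\<Sum>(i, j)\<in>offdiag_pairs n. w i + w j) \<le> (\<Sum>(i, j)\<in>blockA n \<times> blockA n. w i + w j)"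
    by (rule sum_mono2) (auto simp: offdiag_pairs_def assms add_nonneg_nonneg)
  also have "\<dots> = (\<Sum>i\<in>blockA n. \<Sum>j\<in>blockA n. w i + w j)"
    by (rule sum.cartesian_product[symmetric])
  also have "\<dots> = (\<Sum>i\<in>blockA n. real n * w i + (\<Sum>j\<in>blockA n. w j))"
    by (simp add: sum.distrib)
  also have "\<dots> = 2 * real n * (\<Sum>i\<in>blockA n. w i)"
    by (simp add: sum.distrib sum_distrib_left mult.assoc)
  finally show ?thesis .
qed

definition near_pair_energy :: "(nat \<Rightarrow> real) \<Rightarrow> real \<Rightarrow> nat \<Rightarrow> real" where
  "near_pair_energy c d n =
    (\<Sum>(i, j)\<in>{(i, j) \<in> blockA n \<times> blockA n. i \<noteq> j \<and> \<bar>c i - c j\<bar> < d}. - ln \<bar>c i - c j\<bar>)"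

lemma near_pair_energy_eq:
  "near_pair_energy c d n =
    (\<Sum>(i, j)\<in>offdiag_pairs n. if \<bar>c i - c j\<bar> < d then log_kernel (c i, c j) else 0)"
proof -
  have "{(i, j) \<in> blockA n \<times> blockA n. i \<noteq> j \<and> \<bar>c i - c j\<bar> < d}
      = {p \<in> offdiag_pairs n. \<bar>c (fst p) - c (snd p)\<bar> < d}"
    by (auto simp: offdiag_pairs_def)
  then have "near_pair_energy c d n
      = (\<Sum>p\<in>{p \<in> offdiag_pairs n. \<bar>c (fst p) - c (snd p)\<bar> < d}. - ln \<bar>c (fst p) - c (snd p)\<bar>)"
    unfolding near_pair_energy_def by (simp add: split_beta)
  also have "\<dots> = (\<Sum>p\<in>offdiag_pairs n.
      if \<bar>c (fst p) - c (snd p)\<bar> < d then - ln \<bar>c (fst p) - c (snd p)\<bar> else 0)"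
    by (rule sum.inter_filter) simp
  finally show ?thesis
    unfolding log_kernel_def by (simp add: split_beta cong: if_cong)
qed

definition edge_bump :: "nat \<Rightarrow> real \<Rightarrow> real" where
  "edge_bump m x = max 0 (1 - x * (real m + 1) / 2) + max 0 (1 - (1 - x) * (real m + 1) / 2)"

lemma continuous_on_edge_bump: "continuous_on UNIV (edge_bump m)"
  unfolding edge_bump_def by (intro continuous_intros) auto

lemma edge_bump_nonneg: "edge_bump m x \<ge> 0"
  unfolding edge_bump_def by simp

lemma edge_bump_le_2:
  assumes "x \<in> {0..1}"
  shows "edge_bump m x \<le> 2"
proof -
  have "0 \<le> x * (real m + 1)" and "0 \<le> (1 - x) * (real m + 1)"
    using assms by auto
  then show ?thesis
    unfolding edge_bump_def by (auto simp: max_def)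
qed

lemma edge_bump_near_edge:
  assumes "x < 1 / (real m + 1) \<or> 1 - 1 / (real m + 1) < x"
  shows "edge_bump m x \<ge> 1/2"
  using assms unfolding edge_bump_def by (auto simp: field_simps max_def)

lemma edge_bump_eventually_0:
  assumes "0 < x" and "x < 1"
  shows "\<forall>\<^sub>F m in sequentially. edge_bump m x = 0"
proof -
  obtain N :: nat where N: "2 / x + 2 / (1 - x) < real N"
    using reals_Archimedean2 by blast
  show ?thesis
    using eventually_ge_at_top[of N]
  proof eventually_elim
    case (elim m)
    have "2 / x < real m + 1" and "2 / (1 - x) < real m + 1"
      using N elim assms by (smt (verit) divide_pos_pos of_nat_mono)+
    then have "2 < x * (real m + 1)" and "2 < (1 - x) * (real m + 1)"
      using assms by (simp_all add: field_simps)
    then show ?case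
      unfolding edge_bump_def by simp
  qed
qed

context block_equidistributed
begin

lemma near_pair_energy_mono: "d' \<le> d \<Longrightarrow> near_pair_energy c d' n \<le> near_pair_energy c d n"
  unfolding near_pair_energy_eq by (intro sum_mono) (auto intro!: log_kernel_nonneg c_in_unit)

text \<open>\<open>\<Phi>\<close> has no atoms, so only a vanishing proportion of the points lies near the
  endpoints of the unit interval.\<close>
lemma tendsto_integral_edge_bump: "(\<lambda>m. \<integral>x. edge_bump m x * \<Phi> x \<partial>lborel) \<longlonglongrightarrow> 0"
proof -
  have "AE x in lborel. x \<noteq> 0 \<and> x \<noteq> 1"
    using AE_lborel_singleton[of 0] AE_lborel_singleton[of 1] by eventually_elim auto
  then have "AE x in lborel. (\<lambda>m. edge_bump m x * \<Phi> x) \<longlonglongrightarrow> 0"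
  proof eventually_elim
    case (elim x)
    show ?case
    proof (cases "x \<in> {0..1}")
      case True
      then have "\<forall>\<^sub>F m in sequentially. edge_bump m x * \<Phi> x = 0"
        using edge_bump_eventually_0[of x] elim by (auto elim: eventually_mono)
      then show ?thesis
        by (rule tendsto_eventually)
    qed (simp add: \<Phi>_outside)
  qed
  moreover have "AE x in lborel. norm (edge_bump m x * \<Phi> x) \<le> 2 * \<Phi> x" for m
  proof (rule AE_I2)
    fix x
    show "norm (edge_bump m x * \<Phi> x) \<le> 2 * \<Phi> x"
      using edge_bump_le_2[of x m] edge_bump_nonneg[of m x] \<Phi>_nonneg[of x]
      by (cases "x \<in> {0..1}") (auto simp: \<Phi>_outside abs_mult mult_right_mono)
  qed
  moreover have "(\<lambda>x. edge_bump m x * \<Phi> x) \<in> borel_measurable lborel" for m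
    using borel_measurable_continuous_onI[OF continuous_on_edge_bump[of m]] integrable_\<Phi> by measurable
  ultimately show ?thesis
    using Bochner_Integration.integral_dominated_convergence[of "\<lambda>_. 0" lborel
        "\<lambda>m x. edge_bump m x * \<Phi> x" "\<lambda>x. 2 * \<Phi> x"] integrable_\<Phi>
    by simp
qed

end

section \<open>Measures on shrinking intervals\<close>

lemma mem_centred_interval_iff: "x \<in> centred_interval c l \<longleftrightarrow> \<bar>x - c\<bar> < l / 2"
  unfolding centred_interval_def greaterThanLessThan_iff abs_less_iff by auto

lemma integrable_indicator_centred_interval:
  "integrable lborel (indicator (centred_interval c l) :: real \<Rightarrow> real)"
  unfolding centred_interval_def by (intro integrable_real_indicator emeasure_bounded_finite) auto

locale shrinking_interval_measures = block_equidistributed c \<Phi> for c \<Phi> +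
  fixes l :: "nat \<Rightarrow> real" and f :: "real \<Rightarrow> real" and M :: real
  assumes l_pos: "\<And>k. l k > 0"
    and l_decseq: "decseq l"
    and l_tendsto_0: "l \<longlonglongrightarrow> 0"
    and f_cont: "continuous_on UNIV f"
    and f_bounded: "\<And>x. \<bar>f x\<bar> \<le> M"
    and near_pairs_negligible: "\<And>e. e > 0 \<Longrightarrow>
      \<exists>d>0. \<forall>\<^sub>F n in sequentially. near_pair_energy c d n < e * real n ^ 2"
    and intervals_separated: "\<And>e. e > 0 \<Longrightarrow> \<forall>\<^sub>F n in sequentially.
      \<forall>i\<in>blockA n. \<forall>j\<in>blockA n. i \<noteq> j \<longrightarrow> l i + l j < e * (2 * \<bar>c i - c j\<bar>)"
begin

definition mu :: "nat \<Rightarrow> real \<Rightarrow> real" where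
  "mu i = mu_density f (c i) (l i)"

definition mass :: "nat \<Rightarrow> real" where
  "mass i = (\<integral>x. mu i x \<partial>lborel)"

lemma M_nonneg: "M \<ge> 0"
  using f_bounded[of 0] by linarith

lemma borel_measurable_f: "f \<in> borel_measurable lborel"
  using borel_measurable_continuous_onI[OF f_cont] by simp

lemma borel_measurable_mu: "mu i \<in> borel_measurable lborel"
  unfolding mu_def mu_density_def centred_interval_def using borel_measurable_f by measurable

lemma mu_nonzero_imp: "mu i x \<noteq> 0 \<Longrightarrow> x \<in> centred_interval (c i) (l i) \<and> x \<in> {0..1}"
  unfolding mu_def mu_density_def by (auto simp: indicator_def split: if_splits)

lemma abs_mu_le: "\<bar>mu i x\<bar> \<le> M / l i * indicator (centred_interval (c i) (l i)) x"
proof (cases "mu i x = 0")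
  case True
  then show ?thesis
    using M_nonneg l_pos[of i] by simp
next
  case False
  then have "x \<in> centred_interval (c i) (l i)"
    using mu_nonzero_imp by blast
  moreover have "\<bar>mu i x\<bar> \<le> \<bar>f x\<bar> / l i"
    using l_pos[of i] unfolding mu_def mu_density_def by (auto simp: indicator_def abs_mult)
  moreover have "\<bar>f x\<bar> / l i \<le> M / l i"
    using f_bounded[of x] l_pos[of i] by (simp add: divide_right_mono)
  ultimately show ?thesis
    by simp
qed

lemma integrable_mu: "integrable lborel (mu i)"
proof (rule Bochner_Integration.integrable_bound[OF _ borel_measurable_mu])
  show "integrable lborel (\<lambda>x. M / l i * indicator (centred_interval (c i) (l i)) x)"
    using integrable_indicator_centred_interval by (rule integrable_mult_right)
  show "AE x in lborel. norm (mu i x) \<le> norm (M / l i * indicator (centred_interval (c i) (l i)) x)"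
    using order_trans[OF abs_mu_le abs_ge_self] by (intro AE_I2) (simp only: real_norm_def)
qed

lemma integral_abs_mu_le: "(\<integral>x. \<bar>mu i x\<bar> \<partial>lborel) \<le> M"
proof -
  have "(\<integral>x. \<bar>mu i x\<bar> \<partial>lborel) \<le> (\<integral>x. M / l i * indicator (centred_interval (c i) (l i)) x \<partial>lborel)"
    using integrable_mu[of i] abs_mu_le[of i]
    by (intro integral_mono integrable_mult_right integrable_indicator_centred_interval) auto
  also have "\<dots> = M"
    using l_pos[of i] by (simp add: centred_interval_def)
  finally show ?thesis .
qed

lemma abs_mass_le: "\<bar>mass i\<bar> \<le> M"
  unfolding mass_def using integral_abs_bound[of lborel "mu i"] integral_abs_mu_le[of i] by linarith

lemma log_energy_mu_approx:
  assumes e: "0 < e" "e \<le> 1/2" and separated: "l i + l j < e * (2 * \<bar>c i - c j\<bar>)"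
  shows "\<bar>log_energy (mu i) (mu j) - log_kernel (c i, c j) * mass i * mass j\<bar> \<le> 2 * e * M * M"
proof -
  define K where "K z = log_kernel z - log_kernel (c i, c j)" for z
  have "\<bar>c i - c j\<bar> > 0"
  proof -
    have "0 < e * (2 * \<bar>c i - c j\<bar>)"
      using separated l_pos[of i] l_pos[of j] by linarith
    then show ?thesis
      using e by (simp add: zero_less_mult_iff)
  qed
  have K_bound: "\<bar>K (x, y)\<bar> \<le> 2 * e" if "mu i x \<noteq> 0" "mu j y \<noteq> 0" for x y
  proof -
    have "\<bar>x - c i\<bar> < l i / 2" and "\<bar>y - c j\<bar> < l j / 2"
      using mu_nonzero_imp[OF that(1)] mu_nonzero_imp[OF that(2)]
      by (auto simp: mem_centred_interval_iff)
    moreover have "\<bar>(x - y) - (c i - c j)\<bar> \<le> \<bar>x - c i\<bar> + \<bar>y - c j\<bar>"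
      using abs_triangle_ineq4[of "x - c i" "y - c j"] by (simp add: algebra_simps)
    ultimately have "\<bar>\<bar>x - y\<bar> - \<bar>c i - c j\<bar>\<bar> \<le> e * \<bar>c i - c j\<bar>"
      using abs_triangle_ineq3[of "x - y" "c i - c j"] separated by linarith
    then have "\<bar>ln \<bar>x - y\<bar> - ln \<bar>c i - c j\<bar>\<bar> \<le> 2 * e"
      using \<open>\<bar>c i - c j\<bar> > 0\<close> e by (intro abs_ln_diff_le) auto
    then show ?thesis
      unfolding K_def log_kernel_def by simp
  qed
  have K_measurable: "K \<in> borel_measurable (lborel \<Otimes>\<^sub>M lborel)"
    unfolding K_def using borel_measurable_log_kernel by measurable
  note K_integral =
    lborel_pair.bounded_kernel_integral[OF integrable_mu integrable_mu K_measurable _ K_bound]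
  have product: "integrable (lborel \<Otimes>\<^sub>M lborel) (\<lambda>(x, y). mu i x * mu j y)"
    "integral\<^sup>L (lborel \<Otimes>\<^sub>M lborel) (\<lambda>(x, y). mu i x * mu j y) = mass i * mass j"
    using lborel_pair.integrable_tensor[OF integrable_mu integrable_mu]
      lborel_pair.integral_tensor[OF integrable_mu integrable_mu]
    by (auto simp: mass_def)
  have "log_energy (mu i) (mu j) = integral\<^sup>L (lborel \<Otimes>\<^sub>M lborel)
      (\<lambda>z. (case z of (x, y) \<Rightarrow> K (x, y) * mu i x * mu j y)
         + log_kernel (c i, c j) * (case z of (x, y) \<Rightarrow> mu i x * mu j y))"
    unfolding log_energy_eq_log_kernel K_def
    by (intro Bochner_Integration.integral_cong) (auto simp: algebra_simps)
  also have "\<dots> = integral\<^sup>L (lborel \<Otimes>\<^sub>M lborel) (\<lambda>(x, y). K (x, y) * mu i x * mu j y)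
      + log_kernel (c i, c j) * mass i * mass j"
    using K_integral(1) e product by simp
  finally have "\<bar>log_energy (mu i) (mu j) - log_kernel (c i, c j) * mass i * mass j\<bar>
      = \<bar>integral\<^sup>L (lborel \<Otimes>\<^sub>M lborel) (\<lambda>(x, y). K (x, y) * mu i x * mu j y)\<bar>"
    by simp
  also have "\<dots> \<le> 2 * e * (\<integral>x. \<bar>mu i x\<bar> \<partial>lborel) * (\<integral>y. \<bar>mu j y\<bar> \<partial>lborel)"
    using K_integral(2) e by simp
  also have "\<dots> \<le> 2 * e * M * M"
    using integral_abs_mu_le[of i] integral_abs_mu_le[of j] e
    by (intro mult_mono) (auto simp: M_nonneg)
  finally show ?thesis .
qed

lemma f_uniformly_continuous:
  assumes "e > 0"
  obtains \<rho> where "\<rho> > 0"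
    and "\<And>x y. x \<in> {0..1} \<Longrightarrow> y \<in> {0..1} \<Longrightarrow> \<bar>x - y\<bar> < \<rho> \<Longrightarrow> \<bar>f x - f y\<bar> \<le> e"
proof -
  have "uniformly_continuous_on {0..1} f"
    by (rule compact_uniformly_continuous) (auto intro: continuous_on_subset[OF f_cont])
  then obtain \<rho> where "\<rho> > 0" and "\<forall>x\<in>{0..1}. \<forall>y\<in>{0..1}. dist y x < \<rho> \<longrightarrow> dist (f y) (f x) < e"
    unfolding uniformly_continuous_on_def using assms by metis
  then show ?thesis
    by (intro that[of \<rho>]) (auto simp: dist_real_def abs_minus_commute intro: less_imp_le)
qed

text \<open>The extra \<open>M\<close> accounts for the mass lost by restricting to \<open>[0, 1]\<close> when \<open>I\<^sub>i\<close> sticks out.\<close>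
lemma mass_close_to_centre_value:
  assumes small: "l i / 2 < \<rho>" and "\<tau> \<ge> 0"
    and uc: "\<And>x y. x \<in> {0..1} \<Longrightarrow> y \<in> {0..1} \<Longrightarrow> \<bar>x - y\<bar> < \<rho> \<Longrightarrow> \<bar>f x - f y\<bar> \<le> \<tau>"
  shows "\<bar>mass i - f (c i)\<bar> \<le> \<tau> + (if l i / 2 \<le> c i \<and> c i \<le> 1 - l i / 2 then 0 else M)"
proof -
  define B where "B = \<tau> + (if l i / 2 \<le> c i \<and> c i \<le> 1 - l i / 2 then 0 else M)"
  define J where "J = centred_interval (c i) (l i)"
  define g where "g x = mu i x - f (c i) * (indicator J x / l i)" for x
  have l: "l i > 0"
    using l_pos by simp
  have "\<tau> \<le> B"
    using M_nonneg by (simp add: B_def)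
  have integrable_J: "integrable lborel (\<lambda>x. f (c i) * (indicator J x / l i))"
    unfolding J_def using integrable_indicator_centred_interval
    by (intro integrable_mult_right integrable_divide)
  have "mass i - f (c i) = (\<integral>x. g x \<partial>lborel)"
    using Bochner_Integration.integral_diff[OF integrable_mu[of i] integrable_J] l
    by (simp add: g_def mass_def J_def centred_interval_def)
  have g_bound: "\<bar>g x\<bar> \<le> B / l i * indicator J x" for x
  proof (cases "x \<in> J")
    case False
    then have "mu i x = 0"
      using mu_nonzero_imp unfolding J_def by blast
    then show ?thesis
      using False by (simp add: g_def)
  next
    case True
    then have "\<bar>x - c i\<bar> < l i / 2"
      unfolding J_def mem_centred_interval_iff .
    show ?thesis
    proof (cases "x \<in> {0..1}")
      case True
      then have "g x = (f x - f (c i)) / l i"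
        using \<open>x \<in> J\<close> unfolding g_def mu_def mu_density_def J_def by (simp add: diff_divide_distrib)
      moreover have "\<bar>x - c i\<bar> < \<rho>"
        using \<open>\<bar>x - c i\<bar> < l i / 2\<close> small by linarith
      then have "\<bar>f x - f (c i)\<bar> \<le> B"
        using uc[OF True c_in_unit] \<open>\<tau> \<le> B\<close> by fastforce
      ultimately show ?thesis
        using \<open>x \<in> J\<close> l by (simp add: divide_right_mono)
    next
      case False
      then have "g x = - f (c i) / l i"
        using \<open>x \<in> J\<close> unfolding g_def mu_def mu_density_def by simp
      moreover have "\<not> (l i / 2 \<le> c i \<and> c i \<le> 1 - l i / 2)"
        using False \<open>\<bar>x - c i\<bar> < l i / 2\<close> unfolding abs_less_iff by auto
      then have "\<bar>f (c i)\<bar> \<le> B"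
        using f_bounded[of "c i"] \<open>\<tau> \<ge> 0\<close> by (auto simp: B_def)
      ultimately show ?thesis
        using \<open>x \<in> J\<close> l by (simp add: divide_right_mono)
    qed
  qed
  have "\<bar>\<integral>x. g x \<partial>lborel\<bar> \<le> (\<integral>x. \<bar>g x\<bar> \<partial>lborel)"
    by (rule integral_abs_bound)
  also have "\<dots> \<le> (\<integral>x. B / l i * indicator J x \<partial>lborel)"
  proof (rule integral_mono)
    show "integrable lborel (\<lambda>x. \<bar>g x\<bar>)"
      using integrable_mu[of i] integrable_J by (simp add: g_def)
    show "integrable lborel (\<lambda>x. B / l i * indicator J x)"
      unfolding J_def by (intro integrable_mult_right integrable_indicator_centred_interval)
  qed (rule g_bound)
  also have "\<dots> = B"
    using l by (simp add: J_def centred_interval_def)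
  finally show ?thesis
    using \<open>mass i - f (c i) = (\<integral>x. g x \<partial>lborel)\<close> by (simp add: B_def)
qed

definition mass_defect :: "nat \<Rightarrow> real" where
  "mass_defect n = (\<Sum>i\<in>blockA n. \<bar>mass i - f (c i)\<bar>) / real n"

lemma mass_defect_nonneg: "mass_defect n \<ge> 0"
  unfolding mass_defect_def by (simp add: sum_nonneg)

lemma mass_defect_tendsto_0: "mass_defect \<longlonglongrightarrow> 0"
proof (rule LIMSEQ_eventually_le_const_times[where C = "1 + 4 * M"])
  fix e :: real
  assume "e > 0"
  obtain \<rho> where "\<rho> > 0"
    and uc: "\<And>x y. x \<in> {0..1} \<Longrightarrow> y \<in> {0..1} \<Longrightarrow> \<bar>x - y\<bar> < \<rho> \<Longrightarrow> \<bar>f x - f y\<bar> \<le> e"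
    using f_uniformly_continuous[OF \<open>e > 0\<close>] by blast
  have "\<forall>\<^sub>F m in sequentially. (\<integral>x. edge_bump m x * \<Phi> x \<partial>lborel) < e"
    using tendsto_integral_edge_bump \<open>e > 0\<close> by (rule order_tendstoD)
  then obtain m where m: "(\<integral>x. edge_bump m x * \<Phi> x \<partial>lborel) < e"
    by (auto simp: eventually_sequentially)
  define \<eta> where "\<eta> = min \<rho> (1 / (real m + 1))"
  have "\<eta> > 0"
    using \<open>\<rho> > 0\<close> by (simp add: \<eta>_def)
  have "\<forall>\<^sub>F n in sequentially. l n < 2 * \<eta>"
    using l_tendsto_0 \<open>\<eta> > 0\<close> by (intro order_tendstoD) auto
  moreover have "\<forall>\<^sub>F n in sequentially. (\<Sum>k\<in>blockA n. edge_bump m (c k)) / real n < 2 * e"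
    using m \<open>e > 0\<close> by (intro order_tendstoD(2)[OF equidistributed[OF continuous_on_edge_bump]]) simp
  ultimately show "\<forall>\<^sub>F n in sequentially. \<bar>mass_defect n - 0\<bar> \<le> (1 + 4 * M) * e"
    using eventually_gt_at_top[of 0]
  proof eventually_elim
    case (elim n)
    have each: "\<bar>mass i - f (c i)\<bar> \<le> e + M * (2 * edge_bump m (c i))" if "i \<in> blockA n" for i
    proof -
      have "l i < 2 * \<eta>"
        using decseqD[OF l_decseq, of n i] that elim(1) by (auto simp: blockA_def)
      then have "l i / 2 < \<rho>" and near: "l i / 2 < 1 / (real m + 1)"
        by (auto simp: \<eta>_def)
      have "(if l i / 2 \<le> c i \<and> c i \<le> 1 - l i / 2 then 0 else M) \<le> M * (2 * edge_bump m (c i))"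
      proof (cases "l i / 2 \<le> c i \<and> c i \<le> 1 - l i / 2")
        case False
        then have "edge_bump m (c i) \<ge> 1/2"
          using near by (intro edge_bump_near_edge) auto
        then have "M * 1 \<le> M * (2 * edge_bump m (c i))"
          using M_nonneg by (intro mult_left_mono) auto
        then show ?thesis
          by (subst if_not_P[OF False]) simp
      next
        case True
        then show ?thesis
          using M_nonneg edge_bump_nonneg[of m "c i"] by simp
      qed
      then show ?thesis
        using mass_close_to_centre_value[OF \<open>l i / 2 < \<rho>\<close> _ uc] \<open>e > 0\<close> by fastforce
    qed
    have "mass_defect n \<le> (\<Sum>i\<in>blockA n. e + M * (2 * edge_bump m (c i))) / real n"
      unfolding mass_defect_def using each by (intro divide_right_mono sum_mono) auto
    also have "\<dots> = e + 2 * M * ((\<Sum>i\<in>blockA n. edge_bump m (c i)) / real n)"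
      using elim(3)
      by (simp add: sum.distrib sum_distrib_left add_divide_distrib mult.assoc mult.left_commute)
    also have "\<dots> \<le> e + 2 * M * (2 * e)"
      using elim(2) M_nonneg by (intro add_left_mono mult_left_mono) auto
    finally show ?case
      using mass_defect_nonneg[of n] by (simp add: algebra_simps)
  qed
qed

lemma offdiag_log_energy_approx:
  assumes "0 < e" and "e \<le> 1/2"
    and separated: "\<forall>i\<in>blockA n. \<forall>j\<in>blockA n. i \<noteq> j \<longrightarrow> l i + l j < e * (2 * \<bar>c i - c j\<bar>)"
  shows "\<bar>(\<Sum>(i, j)\<in>offdiag_pairs n. log_energy (mu i) (mu j))
      - (\<Sum>(i, j)\<in>offdiag_pairs n. log_kernel (c i, c j) * mass i * mass j)\<bar>
    \<le> real n ^ 2 * (2 * e * M * M)"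
proof -
  have "\<bar>(\<Sum>(i, j)\<in>offdiag_pairs n. log_energy (mu i) (mu j))
      - (\<Sum>(i, j)\<in>offdiag_pairs n. log_kernel (c i, c j) * mass i * mass j)\<bar>
    \<le> (\<Sum>(i, j)\<in>offdiag_pairs n. 2 * e * M * M)"
  proof (rule abs_sum_pairs_diff_le)
    fix i j
    assume "(i, j) \<in> offdiag_pairs n"
    then have "l i + l j < e * (2 * \<bar>c i - c j\<bar>)"
      using separated by (auto simp: offdiag_pairs_def)
    then show "\<bar>log_energy (mu i) (mu j) - log_kernel (c i, c j) * mass i * mass j\<bar> \<le> 2 * e * M * M"
      by (rule log_energy_mu_approx[OF assms(1,2)])
  qed
  also have "\<dots> = real (card (offdiag_pairs n)) * (2 * e * M * M)"
    by simp
  also have "\<dots> \<le> real n ^ 2 * (2 * e * M * M)"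
    using card_offdiag_pairs_le[of n] \<open>e > 0\<close> M_nonneg by (intro mult_right_mono) auto
  finally show ?thesis .
qed

lemma mass_replacement_pointwise:
  assumes "0 < d" and "d \<le> 1"
  shows "\<bar>log_kernel (c i, c j) * mass i * mass j - log_kernel (c i, c j) * f (c i) * f (c j)\<bar>
    \<le> 4 * M * M * (if \<bar>c i - c j\<bar> < d then log_kernel (c i, c j) else 0)
      + M * - ln d * (\<bar>mass i - f (c i)\<bar> + \<bar>mass j - f (c j)\<bar>)"
proof -
  define L where "L = log_kernel (c i, c j)"
  define \<delta> where "\<delta> = \<bar>mass i - f (c i)\<bar> + \<bar>mass j - f (c j)\<bar>"
  have "L \<ge> 0"
    unfolding L_def by (intro log_kernel_nonneg c_in_unit)
  have "\<delta> \<ge> 0" and "- ln d \<ge> 0"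
    using assms by (auto simp: \<delta>_def)
  have "\<bar>mass i * mass j - f (c i) * f (c j)\<bar>
      = \<bar>(mass i - f (c i)) * mass j + f (c i) * (mass j - f (c j))\<bar>"
    by (simp add: algebra_simps)
  also have "\<dots> \<le> \<bar>mass i - f (c i)\<bar> * \<bar>mass j\<bar> + \<bar>f (c i)\<bar> * \<bar>mass j - f (c j)\<bar>"
    by (rule order_trans[OF abs_triangle_ineq]) (simp add: abs_mult)
  also have "\<dots> \<le> \<bar>mass i - f (c i)\<bar> * M + M * \<bar>mass j - f (c j)\<bar>"
    by (intro add_mono mult_left_mono mult_right_mono abs_mass_le f_bounded) auto
  finally have product: "\<bar>mass i * mass j - f (c i) * f (c j)\<bar> \<le> M * \<delta>"
    by (simp add: \<delta>_def algebra_simps)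
  have "\<bar>L * mass i * mass j - L * f (c i) * f (c j)\<bar> = L * \<bar>mass i * mass j - f (c i) * f (c j)\<bar>"
    using \<open>L \<ge> 0\<close> by (simp add: abs_mult mult.assoc flip: right_diff_distrib)
  also have "\<dots> \<le> L * (M * \<delta>)"
    using product \<open>L \<ge> 0\<close> by (rule mult_left_mono)
  also have "\<dots> \<le> 4 * M * M * (if \<bar>c i - c j\<bar> < d then L else 0) + M * - ln d * \<delta>"
  proof (cases "\<bar>c i - c j\<bar> < d")
    case True
    have "\<delta> \<le> 4 * M"
      using abs_mass_le[of i] abs_mass_le[of j] f_bounded[of "c i"] f_bounded[of "c j"]
      unfolding \<delta>_def by linarith
    then have "L * (M * \<delta>) \<le> L * (M * (4 * M))"
      using \<open>L \<ge> 0\<close> M_nonneg by (intro mult_left_mono) auto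
    moreover have "0 \<le> M * - ln d * \<delta>"
      using M_nonneg \<open>\<delta> \<ge> 0\<close> \<open>- ln d \<ge> 0\<close> by (intro mult_nonneg_nonneg)
    ultimately show ?thesis
      using True by (simp add: algebra_simps)
  next
    case False
    then have "L \<le> - ln d"
      unfolding L_def using \<open>d > 0\<close> by (intro log_kernel_le) auto
    then have "L * (M * \<delta>) \<le> - ln d * (M * \<delta>)"
      using M_nonneg \<open>\<delta> \<ge> 0\<close> by (intro mult_right_mono) auto
    then show ?thesis
      using False by (simp add: algebra_simps)
  qed
  finally show ?thesis
    unfolding L_def \<delta>_def .
qed

lemma offdiag_mass_replacement:
  assumes "0 < d" and "d \<le> 1"
  shows "\<bar>(\<Sum>(i, j)\<in>offdiag_pairs n. log_kernel (c i, c j) * mass i * mass j)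
      - (\<Sum>(i, j)\<in>offdiag_pairs n. log_kernel (c i, c j) * f (c i) * f (c j))\<bar>
    \<le> 4 * M * M * near_pair_energy c d n + real n ^ 2 * (2 * M * (- ln d * mass_defect n))"
proof -
  define \<epsilon> where "\<epsilon> i = \<bar>mass i - f (c i)\<bar>" for i
  have "\<bar>(\<Sum>(i, j)\<in>offdiag_pairs n. log_kernel (c i, c j) * mass i * mass j)
      - (\<Sum>(i, j)\<in>offdiag_pairs n. log_kernel (c i, c j) * f (c i) * f (c j))\<bar>
    \<le> (\<Sum>(i, j)\<in>offdiag_pairs n. 4 * M * M * (if \<bar>c i - c j\<bar> < d then log_kernel (c i, c j) else 0)
        + M * - ln d * (\<epsilon> i + \<epsilon> j))"
    using mass_replacement_pointwise[OF assms] by (intro abs_sum_diff_le) (auto simp: \<epsilon>_def)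
  also have "\<dots> = 4 * M * M * near_pair_energy c d n
      + M * - ln d * (\<Sum>(i, j)\<in>offdiag_pairs n. \<epsilon> i + \<epsilon> j)"
  proof -
    have "(\<Sum>(i, j)\<in>offdiag_pairs n. a * h i j + b * (\<epsilon> i + \<epsilon> j))
        = a * (\<Sum>(i, j)\<in>offdiag_pairs n. h i j) + b * (\<Sum>(i, j)\<in>offdiag_pairs n. \<epsilon> i + \<epsilon> j)"
      for a b :: real and h
      by (simp add: sum.distrib sum_distrib_left distrib_left split_beta)
    then show ?thesis
      by (simp only: near_pair_energy_eq)
  qed
  also have "\<dots> \<le> 4 * M * M * near_pair_energy c d n
      + M * - ln d * (2 * real n * (\<Sum>i\<in>blockA n. \<epsilon> i))"
  proof -
    have "0 \<le> M * - ln d"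
      using M_nonneg assms by (intro mult_nonneg_nonneg) auto
    then show ?thesis
      by (intro add_left_mono mult_left_mono sum_offdiag_pairs_add_le) (auto simp: \<epsilon>_def)
  qed
  also have "\<dots> = 4 * M * M * near_pair_energy c d n + real n ^ 2 * (2 * M * (- ln d * mass_defect n))"
    by (cases "n = 0") (simp_all add: mass_defect_def \<epsilon>_def power2_eq_square)
  finally show ?thesis .
qed

lemma offdiag_cut_kernel_replacement:
  assumes "0 < d" and "d \<le> 1" and distinct: "\<forall>i\<in>blockA n. \<forall>j\<in>blockA n. i \<noteq> j \<longrightarrow> c i \<noteq> c j"
  shows "\<bar>(\<Sum>(i, j)\<in>offdiag_pairs n. log_kernel (c i, c j) * f (c i) * f (c j))
      - (\<Sum>(i, j)\<in>blockA n \<times> blockA n. cut_log_kernel d (c i, c j) * f (c i) * f (c j))\<bar>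
    \<le> M * M * near_pair_energy c d n + real n * (M * M * - ln d)"
proof -
  define A where "A = (\<Sum>(i, j)\<in>offdiag_pairs n. log_kernel (c i, c j) * f (c i) * f (c j))"
  define B where "B = (\<Sum>(i, j)\<in>offdiag_pairs n. cut_log_kernel d (c i, c j) * f (c i) * f (c j))"
  define C where "C = (\<Sum>i\<in>blockA n. cut_log_kernel d (c i, c i) * f (c i) * f (c i))"
  have ff: "\<bar>f (c i) * f (c j)\<bar> \<le> M * M" for i j
    unfolding abs_mult using f_bounded M_nonneg by (intro mult_mono) auto
  have "\<bar>A - B\<bar>
      \<le> (\<Sum>(i, j)\<in>offdiag_pairs n. M * M * (if \<bar>c i - c j\<bar> < d then log_kernel (c i, c j) else 0))"
    unfolding A_def B_def
  proof (rule abs_sum_pairs_diff_le)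
    fix i j
    assume "(i, j) \<in> offdiag_pairs n"
    then have "c i \<noteq> c j"
      using distinct by (auto simp: offdiag_pairs_def)
    have "\<bar>log_kernel (c i, c j) * f (c i) * f (c j) - cut_log_kernel d (c i, c j) * f (c i) * f (c j)\<bar>
        = \<bar>log_kernel (c i, c j) - cut_log_kernel d (c i, c j)\<bar> * \<bar>f (c i) * f (c j)\<bar>"
      by (simp add: abs_mult mult.assoc flip: left_diff_distrib)
    also have "\<dots> \<le> (if \<bar>c i - c j\<bar> < d then log_kernel (c i, c j) else 0) * (M * M)"
      using log_kernel_minus_cut_le[OF \<open>c i \<noteq> c j\<close> assms(1,2)] ff
      by (intro mult_mono) (auto simp: log_kernel_nonneg c_in_unit)
    finally show "\<bar>log_kernel (c i, c j) * f (c i) * f (c j)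
        - cut_log_kernel d (c i, c j) * f (c i) * f (c j)\<bar>
        \<le> M * M * (if \<bar>c i - c j\<bar> < d then log_kernel (c i, c j) else 0)"
      by (simp add: mult.commute)
  qed
  also have "\<dots> = M * M * near_pair_energy c d n"
    by (simp add: near_pair_energy_eq sum_distrib_left split_beta)
  finally have offdiag: "\<bar>A - B\<bar> \<le> M * M * near_pair_energy c d n" .
  have diagonal_term: "\<bar>cut_log_kernel d (c i, c i) * f (c i) * f (c i)\<bar> \<le> - ln d * (M * M)" for i
  proof -
    have "\<bar>cut_log_kernel d (c i, c i) * f (c i) * f (c i)\<bar> = - ln d * \<bar>f (c i) * f (c i)\<bar>"
      using assms by (simp add: cut_log_kernel_diag abs_mult)
    also have "\<dots> \<le> - ln d * (M * M)"
      using ff[of i i] assms by (intro mult_left_mono) simp_all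
    finally show ?thesis .
  qed
  have "\<bar>C\<bar> \<le> (\<Sum>i\<in>blockA n. \<bar>cut_log_kernel d (c i, c i) * f (c i) * f (c i)\<bar>)"
    unfolding C_def by (rule sum_abs)
  also have "\<dots> \<le> (\<Sum>i\<in>blockA n. - ln d * (M * M))"
    by (rule sum_mono) (rule diagonal_term)
  finally have diagonal: "\<bar>C\<bar> \<le> real n * (M * M * - ln d)"
    by (simp add: mult_ac)
  have "(\<Sum>(i, j)\<in>blockA n \<times> blockA n. cut_log_kernel d (c i, c j) * f (c i) * f (c j)) = B + C"
    unfolding B_def C_def by (simp add: sum_blockA_square)
  moreover have "\<bar>A - (B + C)\<bar> \<le> \<bar>A - B\<bar> + \<bar>C\<bar>"
    using abs_triangle_ineq4[of "A - B" C] by (simp add: diff_diff_eq)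
  ultimately show ?thesis
    using offdiag diagonal by (simp add: A_def)
qed

lemma distinct_if_separated:
  assumes "\<forall>i\<in>blockA n. \<forall>j\<in>blockA n. i \<noteq> j \<longrightarrow> l i + l j < e * (2 * \<bar>c i - c j\<bar>)"
  shows "\<forall>i\<in>blockA n. \<forall>j\<in>blockA n. i \<noteq> j \<longrightarrow> c i \<noteq> c j"
  using assms l_pos by (metis abs_zero add_pos_pos diff_self mult_zero_right not_less_iff_gr_or_eq)

lemma eventually_distinct_points:
  "\<forall>\<^sub>F n in sequentially. \<forall>i\<in>blockA n. \<forall>j\<in>blockA n. i \<noteq> j \<longrightarrow> c i \<noteq> c j"
  using intervals_separated[OF zero_less_one] by eventually_elim (rule distinct_if_separated)

lemma pair_mean_cut_log_kernel_le:
  assumes "n > 0" and "0 < d" and "0 < d'" and "d' \<le> 1"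
    and distinct: "\<forall>i\<in>blockA n. \<forall>j\<in>blockA n. i \<noteq> j \<longrightarrow> c i \<noteq> c j"
  shows "pair_mean (cut_log_kernel d) n
    \<le> near_pair_energy c d' n / real n ^ 2 + - ln d' + - ln d / real n"
proof -
  have offdiag: "(\<Sum>(i, j)\<in>offdiag_pairs n. cut_log_kernel d (c i, c j))
      \<le> (\<Sum>(i, j)\<in>offdiag_pairs n. (if \<bar>c i - c j\<bar> < d' then log_kernel (c i, c j) else 0) + - ln d')"
  proof (rule sum_mono, clarify)
    fix i j
    assume "(i, j) \<in> offdiag_pairs n"
    then have "c i \<noteq> c j"
      using distinct by (auto simp: offdiag_pairs_def)
    then have "cut_log_kernel d (c i, c j) \<le> log_kernel (c i, c j)"
      by (rule cut_log_kernel_le_log_kernel)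
    moreover have "\<not> \<bar>c i - c j\<bar> < d' \<Longrightarrow> log_kernel (c i, c j) \<le> - ln d'"
      using \<open>0 < d'\<close> by (intro log_kernel_le) auto
    moreover have "0 \<le> - ln d'"
      using \<open>0 < d'\<close> \<open>d' \<le> 1\<close> by simp
    ultimately show "cut_log_kernel d (c i, c j)
        \<le> (if \<bar>c i - c j\<bar> < d' then log_kernel (c i, c j) else 0) + - ln d'"
      by auto
  qed
  also have "\<dots> = near_pair_energy c d' n + real (card (offdiag_pairs n)) * - ln d'"
    by (simp add: near_pair_energy_eq sum_subtractf split_beta)
  also have "\<dots> \<le> near_pair_energy c d' n + real n ^ 2 * - ln d'"
    using card_offdiag_pairs_le[of n] \<open>0 < d'\<close> \<open>d' \<le> 1\<close> by (intro add_left_mono mult_right_mono) auto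
  finally have "(\<Sum>(i, j)\<in>blockA n \<times> blockA n. cut_log_kernel d (c i, c j))
      \<le> near_pair_energy c d' n + real n ^ 2 * - ln d' + real n * - ln d"
    using \<open>0 < d\<close> by (simp add: sum_blockA_square cut_log_kernel_diag)
  then have "pair_mean (cut_log_kernel d) n
      \<le> (near_pair_energy c d' n + real n ^ 2 * - ln d' + real n * - ln d) / real n ^ 2"
    unfolding pair_mean_def by (intro divide_right_mono) auto
  also have "\<dots> = near_pair_energy c d' n / real n ^ 2 + - ln d' + - ln d / real n"
    using \<open>n > 0\<close> by (simp add: field_simps power2_eq_square)
  finally show ?thesis .
qed

lemma pair_integral_cut_log_kernel_bounded:
  obtains C where "\<And>d. 0 < d \<Longrightarrow> d < 1 \<Longrightarrow> pair_integral (cut_log_kernel d) \<le> C"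
proof -
  obtain d0 where "d0 > 0" and near: "\<forall>\<^sub>F n in sequentially. near_pair_energy c d0 n < 1 * real n ^ 2"
    using near_pairs_negligible[OF zero_less_one] by blast
  define d' where "d' = min d0 1"
  have d': "0 < d'" "d' \<le> 1" "d' \<le> d0"
    using \<open>d0 > 0\<close> by (auto simp: d'_def)
  have "pair_integral (cut_log_kernel d) \<le> 1 + - ln d'" if "0 < d" "d < 1" for d
  proof (rule tendsto_le[OF sequentially_bot])
    show "(\<lambda>n. pair_mean (cut_log_kernel d) n) \<longlonglongrightarrow> pair_integral (cut_log_kernel d)"
      using \<open>0 < d\<close> by (intro tendsto_pair_mean continuous_on_cut_log_kernel)
    show "(\<lambda>n. 1 + - ln d' + - ln d / real n) \<longlonglongrightarrow> 1 + - ln d'"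
      using tendsto_add[OF tendsto_const lim_const_over_n, of "1 + - ln d'" "- ln d"] by simp
    show "\<forall>\<^sub>F n in sequentially. pair_mean (cut_log_kernel d) n \<le> 1 + - ln d' + - ln d / real n"
      using near eventually_distinct_points eventually_gt_at_top[of 0]
    proof eventually_elim
      case (elim n)
      have "near_pair_energy c d' n / real n ^ 2 \<le> 1"
        using near_pair_energy_mono[OF d'(3), of n] elim(1,3) by (simp add: divide_le_eq)
      then show ?case
        using pair_mean_cut_log_kernel_le[OF elim(3) \<open>0 < d\<close> d'(1,2) elim(2)] by linarith
    qed
  qed
  then show thesis
    by (rule that)
qed

lemma pair_integral_cut_log_kernel_weighted_approx:
  assumes "integrable (lborel \<Otimes>\<^sub>M lborel) (\<lambda>(x, y). log_kernel (x, y) * \<Phi> x * \<Phi> y)" and "0 < d"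
  shows "\<bar>pair_integral (\<lambda>z. log_kernel z * (f (fst z) * f (snd z)))
      - pair_integral (\<lambda>z. cut_log_kernel d z * (f (fst z) * f (snd z)))\<bar>
    \<le> M * M * (pair_integral log_kernel - pair_integral (cut_log_kernel d))"
proof (rule pair_integral_weighted_diff_le)
  show "integrable (lborel \<Otimes>\<^sub>M lborel) (\<lambda>(x, y). cut_log_kernel d (x, y) * \<Phi> x * \<Phi> y)"
    using \<open>0 < d\<close> by (intro integrable_pair_integrand continuous_on_cut_log_kernel)
  show "(\<lambda>z. f (fst z) * f (snd z)) \<in> borel_measurable (lborel \<Otimes>\<^sub>M lborel)"
    using borel_measurable_f by measurable
  show "\<bar>f (fst z) * f (snd z)\<bar> \<le> M * M" for z
    unfolding abs_mult using f_bounded M_nonneg by (intro mult_mono) auto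
  show "AE z in lborel \<Otimes>\<^sub>M lborel. cut_log_kernel d z \<le> log_kernel z"
    using AE_lborel_pair_neq by eventually_elim (auto intro: cut_log_kernel_le_log_kernel)
qed (rule assms(1))

lemma offdiag_log_energy_mean_approx:
  assumes "n > 0" and e: "0 < e" "e \<le> 1/2" and d: "0 < d" "d \<le> 1"
    and separated: "\<forall>i\<in>blockA n. \<forall>j\<in>blockA n. i \<noteq> j \<longrightarrow> l i + l j < e * (2 * \<bar>c i - c j\<bar>)"
  shows "\<bar>(\<Sum>(i, j)\<in>offdiag_pairs n. log_energy (mu i) (mu j)) / real n ^ 2
      - pair_mean (\<lambda>z. cut_log_kernel d z * (f (fst z) * f (snd z))) n\<bar>
    \<le> 2 * e * M * M + 5 * M * M * (near_pair_energy c d n / real n ^ 2)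
      + 2 * M * (- ln d * mass_defect n) + M * M * - ln d / real n"
    (is "_ \<le> ?bound")
proof -
  define S0 where "S0 = (\<Sum>(i, j)\<in>offdiag_pairs n. log_energy (mu i) (mu j))"
  define S1 where "S1 = (\<Sum>(i, j)\<in>offdiag_pairs n. log_kernel (c i, c j) * mass i * mass j)"
  define S2 where "S2 = (\<Sum>(i, j)\<in>offdiag_pairs n. log_kernel (c i, c j) * f (c i) * f (c j))"
  define S3 where "S3 = (\<Sum>(i, j)\<in>blockA n \<times> blockA n. cut_log_kernel d (c i, c j) * f (c i) * f (c j))"
  define N where "N = real n ^ 2"
  have "N > 0"
    using \<open>n > 0\<close> by (simp add: N_def)
  have "\<bar>S0 / N - S3 / N\<bar> \<le> \<bar>S0 - S1\<bar> / N + \<bar>S1 - S2\<bar> / N + \<bar>S2 - S3\<bar> / N"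
    using dist_triangle[of S0 S3 S1] dist_triangle[of S1 S3 S2] \<open>N > 0\<close>
    by (simp add: dist_real_def abs_divide add_divide_distrib[symmetric] divide_right_mono
        flip: diff_divide_distrib)
  also have "\<dots> \<le> (N * (2 * e * M * M)) / N
      + (4 * M * M * near_pair_energy c d n + N * (2 * M * (- ln d * mass_defect n))) / N
      + (M * M * near_pair_energy c d n + real n * (M * M * - ln d)) / N"
    using offdiag_log_energy_approx[OF e separated] offdiag_mass_replacement[OF d, of n]
      offdiag_cut_kernel_replacement[OF d distinct_if_separated[OF separated]] \<open>N > 0\<close>
    unfolding S0_def S1_def S2_def S3_def N_def by (intro add_mono divide_right_mono) auto
  also have "\<dots> = ?bound"
    using \<open>n > 0\<close> by (simp add: N_def field_simps power2_eq_square)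
  finally have "\<bar>S0 / N - S3 / N\<bar> \<le> ?bound" .
  moreover have "pair_mean (\<lambda>z. cut_log_kernel d z * (f (fst z) * f (snd z))) n = S3 / N"
    by (simp add: pair_mean_def S3_def N_def mult.assoc)
  ultimately show ?thesis
    by (simp add: S0_def N_def)
qed

lemma offdiag_log_energy_mean_close:
  assumes "n > 0" and "0 < e" and d: "0 < d" "d \<le> 1"
    and separated: "\<forall>i\<in>blockA n. \<forall>j\<in>blockA n. i \<noteq> j \<longrightarrow> l i + l j < min e (1/2) * (2 * \<bar>c i - c j\<bar>)"
    and near: "near_pair_energy c d n \<le> e * real n ^ 2"
    and defect: "- ln d * mass_defect n \<le> e" and diagonal: "M * M * - ln d / real n \<le> e"
  shows "\<bar>(\<Sum>(i, j)\<in>offdiag_pairs n. log_energy (mu i) (mu j)) / real n ^ 2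
      - pair_mean (\<lambda>z. cut_log_kernel d z * (f (fst z) * f (snd z))) n\<bar>
    \<le> (7 * M * M + 2 * M + 1) * e"
proof -
  have "2 * min e (1/2) * M * M \<le> 2 * e * M * M"
    using M_nonneg by (simp add: mult_right_mono)
  moreover have "5 * M * M * (near_pair_energy c d n / real n ^ 2) \<le> 5 * M * M * e"
    using near \<open>n > 0\<close> M_nonneg by (intro mult_left_mono) (auto simp: divide_le_eq)
  moreover have "2 * M * (- ln d * mass_defect n) \<le> 2 * M * e"
    using defect M_nonneg by (intro mult_left_mono) auto
  ultimately have "2 * min e (1/2) * M * M + 5 * M * M * (near_pair_energy c d n / real n ^ 2)
      + 2 * M * (- ln d * mass_defect n) + M * M * - ln d / real n
    \<le> 2 * e * M * M + 5 * M * M * e + 2 * M * e + e"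
    using diagonal by linarith
  also have "\<dots> = (7 * M * M + 2 * M + 1) * e"
    by (simp add: algebra_simps)
  moreover have "0 < min e (1/2)" and "min e (1/2) \<le> 1/2"
    using \<open>e > 0\<close> by auto
  ultimately show ?thesis
    using offdiag_log_energy_mean_approx[OF \<open>n > 0\<close> _ _ d separated] by linarith
qed

lemma cut_level_exists:
  assumes "e > 0" and "d0 > 0"
  obtains d where "0 < d" and "d \<le> 1" and "d \<le> d0"
    and "\<bar>pair_integral (\<lambda>z. log_kernel z * (f (fst z) * f (snd z)))
        - pair_integral (\<lambda>z. cut_log_kernel d z * (f (fst z) * f (snd z)))\<bar> \<le> M * M * e"
proof -
  obtain C where "\<And>d. 0 < d \<Longrightarrow> d < 1 \<Longrightarrow> pair_integral (cut_log_kernel d) \<le> C"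
    using pair_integral_cut_log_kernel_bounded by blast
  note energy = pair_integral_cut_log_kernel_tendsto[OF this]
  have "\<forall>\<^sub>F m in sequentially.
      pair_integral log_kernel - e < pair_integral (cut_log_kernel (1 / (real m + 2)))"
    using energy(2) \<open>e > 0\<close> by (intro order_tendstoD) auto
  moreover have "\<forall>\<^sub>F m in sequentially. 1 / (real m + 2) < d0"
    using \<open>d0 > 0\<close> by (intro order_tendstoD) real_asymp+
  ultimately have "\<forall>\<^sub>F m in sequentially.
      pair_integral log_kernel - e < pair_integral (cut_log_kernel (1 / (real m + 2)))
      \<and> 1 / (real m + 2) < d0"
    by eventually_elim simp
  then obtain m
    where m: "pair_integral log_kernel - e < pair_integral (cut_log_kernel (1 / (real m + 2)))"
    and "1 / (real m + 2) < d0"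
    by (auto simp: eventually_sequentially)
  define d where "d = 1 / (real m + 2)"
  have "0 < d" "d \<le> 1" "d \<le> d0"
    using \<open>1 / (real m + 2) < d0\<close> by (auto simp: d_def)
  moreover have "M * M * (pair_integral log_kernel - pair_integral (cut_log_kernel d)) \<le> M * M * e"
    using m M_nonneg unfolding d_def by (intro mult_left_mono) auto
  ultimately show thesis
    using that pair_integral_cut_log_kernel_weighted_approx[OF energy(1) \<open>0 < d\<close>] by fastforce
qed

theorem tendsto_offdiag_log_energy_mean:
  "(\<lambda>n. (\<Sum>(i, j)\<in>offdiag_pairs n. log_energy (mu i) (mu j)) / real n ^ 2)
    \<longlonglongrightarrow> pair_integral (\<lambda>z. log_kernel z * (f (fst z) * f (snd z)))"
proof (rule LIMSEQ_eventually_le_const_times[where C = "8 * M * M + 2 * M + 2"])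
  fix e :: real
  assume "e > 0"
  obtain d0 where "d0 > 0" and near: "\<forall>\<^sub>F n in sequentially. near_pair_energy c d0 n < e * real n ^ 2"
    using near_pairs_negligible[OF \<open>e > 0\<close>] by blast
  obtain d where d: "0 < d" "d \<le> 1" "d \<le> d0"
    and limit_close: "\<bar>pair_integral (\<lambda>z. log_kernel z * (f (fst z) * f (snd z)))
        - pair_integral (\<lambda>z. cut_log_kernel d z * (f (fst z) * f (snd z)))\<bar> \<le> M * M * e"
    using cut_level_exists[OF \<open>e > 0\<close> \<open>d0 > 0\<close>] by blast
  define G where "G z = cut_log_kernel d z * (f (fst z) * f (snd z))" for z
  have "continuous_on UNIV G"
    unfolding G_def using continuous_on_cut_log_kernel[OF \<open>0 < d\<close>]
    by (intro continuous_intros continuous_on_compose2[OF f_cont]) auto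
  have "0 < min e (1/2)"
    using \<open>e > 0\<close> by simp
  have "(\<lambda>n. - ln d * mass_defect n) \<longlonglongrightarrow> 0"
    by (rule tendsto_mult_right_zero[OF mass_defect_tendsto_0])
  then have "\<forall>\<^sub>F n in sequentially. - ln d * mass_defect n < e"
    using \<open>e > 0\<close> by (rule order_tendstoD)
  moreover have "\<forall>\<^sub>F n in sequentially. M * M * - ln d / real n < e"
    using lim_const_over_n \<open>e > 0\<close> by (rule order_tendstoD)
  moreover have "\<forall>\<^sub>F n in sequentially. dist (pair_mean G n) (pair_integral G) < e"
    using tendsto_pair_mean[OF \<open>continuous_on UNIV G\<close>] \<open>e > 0\<close> by (rule tendstoD)
  moreover have "\<forall>\<^sub>F n in sequentially. near_pair_energy c d n \<le> e * real n ^ 2"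
    using near
  proof eventually_elim
    case (elim n)
    then show ?case
      using near_pair_energy_mono[OF d(3), of n] by linarith
  qed
  ultimately show "\<forall>\<^sub>F n in sequentially.
      \<bar>(\<Sum>(i, j)\<in>offdiag_pairs n. log_energy (mu i) (mu j)) / real n ^ 2
        - pair_integral (\<lambda>z. log_kernel z * (f (fst z) * f (snd z)))\<bar> \<le> (8 * M * M + 2 * M + 2) * e"
    using intervals_separated[OF \<open>0 < min e (1/2)\<close>] eventually_gt_at_top[of 0]
  proof eventually_elim
    case (elim n)
    then have "\<bar>(\<Sum>(i, j)\<in>offdiag_pairs n. log_energy (mu i) (mu j)) / real n ^ 2 - pair_mean G n\<bar>
        \<le> (7 * M * M + 2 * M + 1) * e"
      unfolding G_def by (intro offdiag_log_energy_mean_close \<open>e > 0\<close> d(1,2)) auto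
    moreover have "(7 * M * M + 2 * M + 1) * e + e + M * M * e = (8 * M * M + 2 * M + 2) * e"
      by (simp add: algebra_simps)
    ultimately show ?case
      using elim(3) limit_close dist_triangle[of _ "pair_integral G" "pair_mean G n"]
        dist_triangle[of _ _ "pair_integral G"]
      unfolding G_def dist_real_def by (smt (verit))
  qed
qed

end

section \<open>The hypotheses of the theorem\<close>

lemma mu_density_cong:
  assumes "\<And>x. x \<in> {0..1} \<Longrightarrow> f x = g x"
  shows "mu_density f c l = mu_density g c l"
  using assms by (auto simp: mu_density_def indicator_def fun_eq_iff)

lemma log_energy_cong_AE:
  assumes "AE x in lborel. g x = g' x" and "AE y in lborel. h y = h' y"
    and measurable: "g \<in> borel_measurable lborel" "g' \<in> borel_measurable lborel"
      "h \<in> borel_measurable lborel" "h' \<in> borel_measurable lborel"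
  shows "log_energy g h = log_energy g' h'"
proof -
  have "AE z in lborel \<Otimes>\<^sub>M lborel. g (fst z) = g' (fst z) \<and> h (snd z) = h' (snd z)"
  proof (rule lborel_pair.AE_pair_measure)
    show "{z \<in> space (lborel \<Otimes>\<^sub>M lborel). g (fst z) = g' (fst z) \<and> h (snd z) = h' (snd z)}
        \<in> sets (lborel \<Otimes>\<^sub>M lborel)"
      using measurable by measurable
    show "AE x in lborel. AE y in lborel.
        g (fst (x, y)) = g' (fst (x, y)) \<and> h (snd (x, y)) = h' (snd (x, y))"
      using assms(1) by eventually_elim (use assms(2) in \<open>auto elim: eventually_mono\<close>)
  qed
  then have "AE z in lborel \<Otimes>\<^sub>M lborel. (\<lambda>(x, y). - ln \<bar>x - y\<bar> * g x * h y) z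
      = (\<lambda>(x, y). - ln \<bar>x - y\<bar> * g' x * h' y) z"
    by eventually_elim (simp add: split_beta)
  moreover have "(\<lambda>(x, y). - ln \<bar>x - y\<bar> * g x * h y) \<in> borel_measurable (lborel \<Otimes>\<^sub>M lborel)"
    using measurable by measurable
  moreover have "(\<lambda>(x, y). - ln \<bar>x - y\<bar> * g' x * h' y) \<in> borel_measurable (lborel \<Otimes>\<^sub>M lborel)"
    using measurable by measurable
  ultimately show ?thesis
    unfolding log_energy_def by (intro integral_cong_AE)
qed

lemma unit_interval_continuous_extension:
  fixes f :: "real \<Rightarrow> real"
  assumes "continuous_on {0..1} f"
  obtains g B where "continuous_on UNIV g" and "\<And>x. x \<in> {0..1} \<Longrightarrow> g x = f x" and "\<And>x. \<bar>g x\<bar> \<le> B"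
proof -
  define g where "g x = f (max 0 (min 1 x))" for x
  have "continuous_on UNIV g"
    unfolding g_def by (rule continuous_on_compose2[OF assms]) (auto intro!: continuous_intros)
  moreover obtain B where "\<And>x. x \<in> {0..1} \<Longrightarrow> norm (f x) \<le> B"
    using continuous_on_compact_bound[OF compact_Icc assms] by blast
  then have "\<bar>g x\<bar> \<le> B" for x
    unfolding g_def by simp
  moreover have "g x = f x" if "x \<in> {0..1}" for x
    using that by (simp add: g_def)
  ultimately show thesis
    using that by blast
qed

lemma log_energy_indicator_density:
  fixes f g \<phi> :: "real \<Rightarrow> real"
  assumes g: "continuous_on UNIV g" "\<And>x. x \<in> {0..1} \<Longrightarrow> g x = f x"
    and phi_int: "set_integrable lborel {0..1} \<phi>"
    and phi_pos: "AE x in lborel. x \<in> {0..1} \<longrightarrow> \<phi> x > 0"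
  shows "log_energy (\<lambda>x. indicator {0..1} x * f x * \<phi> x) (\<lambda>x. indicator {0..1} x * f x * \<phi> x)
    = log_energy (\<lambda>x. g x * \<bar>indicator {0..1} x * \<phi> x\<bar>) (\<lambda>x. g x * \<bar>indicator {0..1} x * \<phi> x\<bar>)"
proof -
  have eq: "(\<lambda>x. indicator {0..1} x * f x * \<phi> x) = (\<lambda>x. g x * (indicator {0..1} x * \<phi> x))"
    using g(2) by (auto simp: indicator_def)
  have ae: "AE x in lborel. g x * (indicator {0..1} x * \<phi> x) = g x * \<bar>indicator {0..1} x * \<phi> x\<bar>"
    using phi_pos by eventually_elim (auto simp: indicator_def)
  have "(\<lambda>x. indicator {0..1} x * \<phi> x) \<in> borel_measurable lborel"
    and "g \<in> borel_measurable lborel"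
    using phi_int borel_measurable_continuous_onI[OF g(1)]
    by (simp_all add: set_integrable_def borel_measurable_integrable)
  then have "(\<lambda>x. g x * (indicator {0..1} x * \<phi> x)) \<in> borel_measurable lborel"
    and "(\<lambda>x. g x * \<bar>indicator {0..1} x * \<phi> x\<bar>) \<in> borel_measurable lborel"
    by measurable
  then show ?thesis
    unfolding eq by (intro log_energy_cong_AE[OF ae ae])
qed

text \<open>\<open>\<phi>\<close> is positive only almost everywhere on \<open>[0, 1]\<close>; the absolute value is an everywhere
  nonnegative version of the same density.\<close>
lemma block_equidistributed_abs_density:
  fixes c \<phi> :: "_ \<Rightarrow> real"
  assumes c_range: "\<And>k. c k \<in> {0<..<1}"
    and phi_int: "set_integrable lborel {0..1} \<phi>"
    and phi_pos: "AE x in lborel. x \<in> {0..1} \<longrightarrow> \<phi> x > 0"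
    and A1: "\<And>g. continuous_on {0..1} g \<Longrightarrow>
      (\<lambda>n. (\<Sum>k\<in>blockA n. g (c k)) / real (card (blockA n))) \<longlonglongrightarrow> (LINT x:{0..1}|lborel. g x * \<phi> x)"
  shows "block_equidistributed c (\<lambda>x. \<bar>indicator {0..1} x * \<phi> x\<bar>)"
proof
  have integrable: "integrable lborel (\<lambda>x. indicator {0..1} x * \<phi> x)"
    using phi_int by (simp add: set_integrable_def)
  then show "integrable lborel (\<lambda>x. \<bar>indicator {0..1} x * \<phi> x\<bar>)"
    by simp
  show "c k \<in> {0..1}" for k
    using c_range[of k] by simp
  show "\<bar>indicator {0..1} x * \<phi> x\<bar> \<ge> 0" for x :: real
    by simp
  show "x \<notin> {0..1} \<Longrightarrow> \<bar>indicator {0..1} x * \<phi> x\<bar> = 0" for x :: real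
    by simp
  fix g :: "real \<Rightarrow> real"
  assume g: "continuous_on UNIV g"
  then have "g \<in> borel_measurable lborel"
    using borel_measurable_continuous_onI by simp
  have "(LINT x:{0..1}|lborel. g x * \<phi> x) = (\<integral>x. g x * (indicator {0..1} x * \<phi> x) \<partial>lborel)"
    unfolding set_lebesgue_integral_def by (intro Bochner_Integration.integral_cong) auto
  also have "\<dots> = (\<integral>x. g x * \<bar>indicator {0..1} x * \<phi> x\<bar> \<partial>lborel)"
    using phi_pos \<open>g \<in> borel_measurable lborel\<close> borel_measurable_integrable[OF integrable]
    by (intro integral_cong_AE) (auto elim!: eventually_mono simp: indicator_def)
  finally show "(\<lambda>n. (\<Sum>k\<in>blockA n. g (c k)) / real n)
      \<longlonglongrightarrow> (\<integral>x. g x * \<bar>indicator {0..1} x * \<phi> x\<bar> \<partial>lborel)"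
    using A1[OF continuous_on_subset[OF g subset_UNIV]] by simp
qed

text \<open>Only the diagonal blocks \<open>n' = n'' = n\<close> of (A2) and the block \<open>A\<^sub>n \<subseteq> A\<^sub>n\<^sub>,\<^sub>q\<^sub>(\<^sub>n\<^sub>)\<close> of (A3)
  are needed.\<close>
lemma diagonal_block_hypotheses:
  fixes c l :: "nat \<Rightarrow> real"
  assumes "\<exists>q :: nat \<Rightarrow> nat. filterlim q at_top sequentially \<and>
      (\<forall>\<epsilon>>0. \<exists>\<delta>>0. \<forall>\<^sub>F n in sequentially.
          \<forall>n' \<in> {2 ^ m * n | m. m \<le> q n}. \<forall>n'' \<in> {2 ^ m * n | m. m \<le> q n}.
            (\<Sum>(i, j) \<in> {(i, j) \<in> blockA n' \<times> blockA n''. i \<noteq> j \<and> \<bar>c i - c j\<bar> < \<delta>}.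
                 - ln \<bar>c i - c j\<bar>) / real (card (blockA n' \<times> blockA n'')) < \<epsilon>) \<and>
      (\<forall>\<epsilon>>0. \<forall>\<^sub>F n in sequentially.
          \<forall>i \<in> blockAq n (q n). \<forall>j \<in> blockAq n (q n).
            i \<noteq> j \<longrightarrow> l i + l j < \<epsilon> * (2 * \<bar>c i - c j\<bar>))"
  shows "\<And>e. e > 0 \<Longrightarrow> \<exists>d>0. \<forall>\<^sub>F n in sequentially. near_pair_energy c d n < e * real n ^ 2"
    and "\<And>e. e > 0 \<Longrightarrow> \<forall>\<^sub>F n in sequentially.
      \<forall>i\<in>blockA n. \<forall>j\<in>blockA n. i \<noteq> j \<longrightarrow> l i + l j < e * (2 * \<bar>c i - c j\<bar>)"
proof -
  obtain q :: "nat \<Rightarrow> nat" where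
    A2: "\<forall>\<epsilon>>0. \<exists>\<delta>>0. \<forall>\<^sub>F n in sequentially.
          \<forall>n' \<in> {2 ^ m * n | m. m \<le> q n}. \<forall>n'' \<in> {2 ^ m * n | m. m \<le> q n}.
            (\<Sum>(i, j) \<in> {(i, j) \<in> blockA n' \<times> blockA n''. i \<noteq> j \<and> \<bar>c i - c j\<bar> < \<delta>}.
                 - ln \<bar>c i - c j\<bar>) / real (card (blockA n' \<times> blockA n'')) < \<epsilon>"
    and A3: "\<forall>\<epsilon>>0. \<forall>\<^sub>F n in sequentially.
          \<forall>i \<in> blockAq n (q n). \<forall>j \<in> blockAq n (q n).
            i \<noteq> j \<longrightarrow> l i + l j < \<epsilon> * (2 * \<bar>c i - c j\<bar>)"
    using assms by blast
  have own_block: "n \<in> {2 ^ m * n | m. m \<le> q n}" for n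
    by (rule CollectI, rule exI[of _ 0]) simp
  have own_union: "blockA n \<subseteq> blockAq n (q n)" for n
    unfolding blockAq_def using UN_upper[of 0 "{..q n}" "\<lambda>m. blockA (2 ^ m * n)"] by simp
  show "\<forall>\<^sub>F n in sequentially.
      \<forall>i\<in>blockA n. \<forall>j\<in>blockA n. i \<noteq> j \<longrightarrow> l i + l j < e * (2 * \<bar>c i - c j\<bar>)" if "e > 0" for e
  proof -
    have "\<forall>\<^sub>F n in sequentially. \<forall>i \<in> blockAq n (q n). \<forall>j \<in> blockAq n (q n).
        i \<noteq> j \<longrightarrow> l i + l j < e * (2 * \<bar>c i - c j\<bar>)"
      using A3 that by blast
    then show ?thesis
      by eventually_elim (use own_union in \<open>auto simp: subset_eq\<close>)
  qed
  show "\<exists>d>0. \<forall>\<^sub>F n in sequentially. near_pair_energy c d n < e * real n ^ 2" if "e > 0" for e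
  proof -
    obtain d where "d > 0" and blocks: "\<forall>\<^sub>F n in sequentially.
          \<forall>n' \<in> {2 ^ m * n | m. m \<le> q n}. \<forall>n'' \<in> {2 ^ m * n | m. m \<le> q n}.
            (\<Sum>(i, j) \<in> {(i, j) \<in> blockA n' \<times> blockA n''. i \<noteq> j \<and> \<bar>c i - c j\<bar> < d}.
                 - ln \<bar>c i - c j\<bar>) / real (card (blockA n' \<times> blockA n'')) < e"
      using A2 \<open>e > 0\<close> by blast
    from blocks have "\<forall>\<^sub>F n in sequentially.
        (\<Sum>(i, j) \<in> {(i, j) \<in> blockA n \<times> blockA n. i \<noteq> j \<and> \<bar>c i - c j\<bar> < d}.
           - ln \<bar>c i - c j\<bar>) / real (card (blockA n \<times> blockA n)) < e"
    proof eventually_elim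
      case (elim n)
      then show ?case
        using own_block[of n] by blast
    qed
    then have "\<forall>\<^sub>F n in sequentially. near_pair_energy c d n < e * real n ^ 2"
      using eventually_gt_at_top[of 0]
      by eventually_elim
        (simp add: near_pair_energy_def card_cartesian_product power2_eq_square divide_less_eq)
    then show ?thesis
      using \<open>d > 0\<close> by blast
  qed
qed

theorem lemma4p6:
  fixes c l :: "nat \<Rightarrow> real" and f \<phi> :: "real \<Rightarrow> real"
  assumes c_range: "\<And>k. c k \<in> {0<..<1}"
    and l_pos: "\<And>k. l k > 0"
    and l_dec: "decseq l"
    and l_lim: "l \<longlonglongrightarrow> 0"
    and f_cont: "continuous_on {0..1} f"
    \<comment> \<open>(A1)\<close>
    and phi_int: "set_integrable lborel {0..1} \<phi>"
    and phi_pos: "AE x in lborel. x \<in> {0..1} \<longrightarrow> \<phi> x > 0"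
    and A1: "\<And>g. continuous_on {0..1} g \<Longrightarrow>
              (\<lambda>n. (\<Sum>k\<in>blockA n. g (c k)) / real (card (blockA n)))
                \<longlonglongrightarrow> (LINT x:{0..1}|lborel. g x * \<phi> x)"
    \<comment> \<open>(A2) and (A3), for a common sequence q(n) tending to infinity\<close>
    and A23: "\<exists>q :: nat \<Rightarrow> nat. filterlim q at_top sequentially \<and>
      (\<forall>\<epsilon>>0. \<exists>\<delta>>0. \<forall>\<^sub>F n in sequentially.
          \<forall>n' \<in> {2 ^ m * n | m. m \<le> q n}. \<forall>n'' \<in> {2 ^ m * n | m. m \<le> q n}.
            (\<Sum>(i, j) \<in> {(i, j) \<in> blockA n' \<times> blockA n''. i \<noteq> j \<and> \<bar>c i - c j\<bar> < \<delta>}.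
                 - ln \<bar>c i - c j\<bar>) / real (card (blockA n' \<times> blockA n'')) < \<epsilon>) \<and>
      (\<forall>\<epsilon>>0. \<forall>\<^sub>F n in sequentially.
          \<forall>i \<in> blockAq n (q n). \<forall>j \<in> blockAq n (q n).
            i \<noteq> j \<longrightarrow> l i + l j < \<epsilon> * (2 * \<bar>c i - c j\<bar>))"
  shows "(\<lambda>n. (\<Sum>(i, j) \<in> {(i, j) \<in> blockA n \<times> blockA n. i \<noteq> j}.
               log_energy (mu_density f (c i) (l i)) (mu_density f (c j) (l j)))
             / real (card (blockA n)) ^ 2)
         \<longlonglongrightarrow> log_energy (\<lambda>x. indicator {0..1} x * f x * \<phi> x)
                                (\<lambda>x. indicator {0..1} x * f x * \<phi> x)"
proof -
  obtain g B where g: "continuous_on UNIV g" "\<And>x. x \<in> {0..1} \<Longrightarrow> g x = f x" "\<And>x. \<bar>g x\<bar> \<le> B"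
    using unit_interval_continuous_extension[OF f_cont] by blast
  define \<Phi> where "\<Phi> x = \<bar>indicator {0..1} x * \<phi> x\<bar>" for x
  interpret shrinking_interval_measures c \<Phi> l g B
  proof (rule shrinking_interval_measures.intro)
    show "block_equidistributed c \<Phi>"
      unfolding \<Phi>_def by (rule block_equidistributed_abs_density[OF c_range phi_int phi_pos A1])
    show "shrinking_interval_measures_axioms c l g B"
      by (rule shrinking_interval_measures_axioms.intro[OF l_pos l_dec l_lim g(1) g(3)
            diagonal_block_hypotheses[OF A23]])
  qed
  have "mu_density f (c i) (l i) = mu i" for i
    unfolding mu_def using g(2) by (rule mu_density_cong[symmetric])
  moreover have "log_energy (\<lambda>x. indicator {0..1} x * f x * \<phi> x) (\<lambda>x. indicator {0..1} x * f x * \<phi> x)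
      = pair_integral (\<lambda>z. log_kernel z * (g (fst z) * g (snd z)))"
    using log_energy_indicator_density[OF g(1,2) phi_int phi_pos] log_energy_weighted_eq_pair_integral[of g]
    by (simp add: \<Phi>_def)
  ultimately show ?thesis
    using tendsto_offdiag_log_energy_mean by (simp add: offdiag_pairs_def)
qed

end
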